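(* Let $n\ge1$, $\nu\ge1$ be integers and $\delta\in\{0,1,2\}$. The graph $\mathcal{O}^{(2\nu+\delta)}_{2^n}$ is $2^{n(2\nu+\delta-2)}$-regular on $2^{(n-1)(2\nu+\delta-2)}(2^\nu-1)(2^{\nu+\delta-1}+1)$ vertices. Moreover: (1) If $\nu=1$, then it is a strongly regular graph in which every pair of adjacent vertices has $\lambda=2^{\delta n}-2^{\delta(n-1)}$ common neighbours and every pair of non-adjacent vertices has $\mu=\lceil\delta/2\rceil 2^{\delta n}$ common neighbours. (2) If $\nu\ge2$, then it is a quasi-strongly regular graph in which every pair of adjacent vertices has $\lambda=2^{n-1}\big(2^{n(\nu+\frac{\delta}{2}-1)}+(\delta-1)2^{(n-1)(\nu+\frac{\delta}{2}-1)}\big)2^{n(\nu-2+\frac{\delta}{2})}$ common neighbours and every pair of non-adjacent vertices has either $c_1=2^{n-1}2^{n(2\nu-3+\delta)}$ or $c_2=2^{n(2\nu-2+\delta)}$ common neighbours.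
   Context: Let $V^{2\nu+\delta}$ be the set of tuples $\vec a=(a_1,\ldots,a_{2\nu+\delta})\in(\mathbb{Z}_{2^n})^{2\nu+\delta}$ such that some $a_i$ is a unit of $\mathbb{Z}_{2^n}$. Write $\vec a\sim\vec b$ if $\vec a=\lambda\vec b$ for some $\lambda\in\mathbb{Z}_{2^n}^\times$, let $[\vec a]$ denote the equivalence class and $V^{2\nu+\delta}_\sim$ the set of classes. Let $G_{2\nu+\delta,\Delta}=\begin{pmatrix}0&I_\nu&\\ &0&\\ &&\Delta\end{pmatrix}$ over $\mathbb{Z}_{2^n}$ (first two block sizes $\nu$, unspecified blocks zero), where $\Delta$ is empty if $\delta=0$, $\Delta=(1)$ if $\delta=1$, and $\Delta=\begin{pmatrix}z&1\\0&z\end{pmatrix}$ if $\delta=2$, with $z$ a fixed unit of $\mathbb{Z}_{2^n}$. The orthogonal graph $\mathcal{O}^{(2\nu+\delta)}_{2^n}$ has vertex set $\{[\vec a]\in V^{2\nu+\delta}_\sim:\vec a\,G_{2\nu+\delta,\Delta}\,\vec a^t=0\}$, with $[\vec a]$ adjacent to $[\vec b]$ iff $\vec a(G_{2\nu+\delta,\Delta}+G_{2\nu+\delta,\Delta}^t)\vec b^t\in\mathbb{Z}_{2^n}^\times$. A quasi-strongly regular graph with parameters $(v,k,\lambda,\{c_1,\ldots,c_d\})$ is a $k$-regular graph on $v$ vertices in which every pair of adjacent vertices has $\lambda$ common neighbours and every pair of non-adjacent vertices has one of $c_1,\ldots,c_d$ common neighbours, for some $d\ge2$. *)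

theory Defs
  imports Complex_Main
begin

text \<open>The ring Z_q (q = 2^n) is modelled by the integers 0..q-1 with arithmetic mod q.\<close>

definition zunit :: "int \<Rightarrow> int \<Rightarrow> bool" where
  "zunit q a \<longleftrightarrow> (\<exists>b. (a * b) mod q = 1 mod q)"

definition Vtuples :: "nat \<Rightarrow> int \<Rightarrow> int list set" where
  "Vtuples m q = {xs. length xs = m \<and> set xs \<subseteq> {0..<q} \<and> (\<exists>i<m. zunit q (xs ! i))}"

definition scale :: "int \<Rightarrow> int \<Rightarrow> int list \<Rightarrow> int list" where
  "scale q l xs = map (\<lambda>x. (l * x) mod q) xs"

definition cls :: "int \<Rightarrow> int list \<Rightarrow> int list set" where
  "cls q xs = {scale q l xs | l. l \<in> {0..<q} \<and> zunit q l}"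

text \<open>The matrix G_{2nu+delta,Delta} (indices from 0), with z the fixed unit.\<close>
definition Gmat :: "nat \<Rightarrow> nat \<Rightarrow> int \<Rightarrow> nat \<Rightarrow> nat \<Rightarrow> int" where
  "Gmat \<nu> \<delta> z i j =
     (if i < \<nu> \<and> j = i + \<nu> then 1
      else if \<delta> = 1 \<and> i = 2*\<nu> \<and> j = 2*\<nu> then 1
      else if \<delta> = 2 \<and> i = 2*\<nu> \<and> j = 2*\<nu> then z
      else if \<delta> = 2 \<and> i = 2*\<nu> \<and> j = 2*\<nu>+1 then 1
      else if \<delta> = 2 \<and> i = 2*\<nu>+1 \<and> j = 2*\<nu>+1 then z
      else 0)"

definition bform :: "nat \<Rightarrow> (nat \<Rightarrow> nat \<Rightarrow> int) \<Rightarrow> int list \<Rightarrow> int list \<Rightarrow> int" where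
  "bform m M a b = (\<Sum>i<m. \<Sum>j<m. a ! i * M i j * b ! j)"

definition Overts :: "nat \<Rightarrow> nat \<Rightarrow> nat \<Rightarrow> int \<Rightarrow> int list set set" where
  "Overts n \<nu> \<delta> z =
     {cls (2^n) a | a. a \<in> Vtuples (2*\<nu>+\<delta>) (2^n)
        \<and> bform (2*\<nu>+\<delta>) (Gmat \<nu> \<delta> z) a a mod 2^n = 0}"

definition Oadj :: "nat \<Rightarrow> nat \<Rightarrow> nat \<Rightarrow> int \<Rightarrow> int list set \<Rightarrow> int list set \<Rightarrow> bool" where
  "Oadj n \<nu> \<delta> z A B \<longleftrightarrow>
     (\<exists>a\<in>A. \<exists>b\<in>B. zunit (2^n)
        (bform (2*\<nu>+\<delta>) (\<lambda>i j. Gmat \<nu> \<delta> z i j + Gmat \<nu> \<delta> z j i) a b))"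

definition common_nbrs :: "'a set \<Rightarrow> ('a \<Rightarrow> 'a \<Rightarrow> bool) \<Rightarrow> 'a \<Rightarrow> 'a \<Rightarrow> nat" where
  "common_nbrs V adj u v = card {w \<in> V. adj u w \<and> adj v w}"

definition regular_graph :: "'a set \<Rightarrow> ('a \<Rightarrow> 'a \<Rightarrow> bool) \<Rightarrow> real \<Rightarrow> real \<Rightarrow> bool" where
  "regular_graph V adj v k \<longleftrightarrow>
     finite V \<and> real (card V) = v
     \<and> (\<forall>x\<in>V. \<forall>y\<in>V. adj x y = adj y x) \<and> (\<forall>x\<in>V. \<not> adj x x)
     \<and> (\<forall>x\<in>V. real (card {w \<in> V. adj x w}) = k)"

definition strongly_regular :: "'a set \<Rightarrow> ('a \<Rightarrow> 'a \<Rightarrow> bool) \<Rightarrow> real \<Rightarrow> real \<Rightarrow> real \<Rightarrow> real \<Rightarrow> bool" where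
  "strongly_regular V adj v k l mu \<longleftrightarrow>
     regular_graph V adj v k
     \<and> (\<forall>x\<in>V. \<forall>y\<in>V. adj x y \<longrightarrow> real (common_nbrs V adj x y) = l)
     \<and> (\<forall>x\<in>V. \<forall>y\<in>V. x \<noteq> y \<and> \<not> adj x y \<longrightarrow> real (common_nbrs V adj x y) = mu)"

definition quasi_strongly_regular :: "'a set \<Rightarrow> ('a \<Rightarrow> 'a \<Rightarrow> bool) \<Rightarrow> real \<Rightarrow> real \<Rightarrow> real \<Rightarrow> real set \<Rightarrow> bool" where
  "quasi_strongly_regular V adj v k l C \<longleftrightarrow>
     regular_graph V adj v k \<and> finite C \<and> card C \<ge> 2
     \<and> (\<forall>x\<in>V. \<forall>y\<in>V. adj x y \<longrightarrow> real (common_nbrs V adj x y) = l)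
     \<and> (\<forall>x\<in>V. \<forall>y\<in>V. x \<noteq> y \<and> \<not> adj x y \<longrightarrow> real (common_nbrs V adj x y) \<in> C)"

end

theory Submission
  imports Defs
begin

text \<open>Everything reduces to the quadratic space over \<open>\<int>/2\<close>. An integer is a unit mod
\<open>2^n\<close> iff it is odd, so reduction mod 2 maps every vertex \<open>[a]\<close> to a nonzero vector of
\<open>\<bbbF>\<^sub>2\<^sup>m\<close> (\<open>m = 2\<nu>+\<delta>\<close>) that is isotropic for the reduced quadratic form \<open>Q\<close>,
and \<open>[a] \<sim> [b]\<close> iff \<open>B(a mod 2, b mod 2) = 1\<close> for the polar form \<open>B\<close>. Each nonzero
isotropic \<open>P\<close> has exactly \<open>2^((n-1)(m-1))\<close> isotropic lifts (the coordinate paired with an odd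
coordinate of \<open>P\<close> is determined by a linear congruence), forming \<open>2^((n-1)(m-2))\<close> classes.
Hence every count in the graph is \<open>2^((n-1)(m-2))\<close> times a count of isotropic vectors of
\<open>\<bbbF>\<^sub>2\<^sup>m\<close> subject to one or two linear conditions, and these are evaluated with the
character sums \<open>\<Sum>\<^sub>x (-1)^(Q x + B(u,x)) = (-1)^(Q u) S\<close>, where
\<open>S = \<Sum>\<^sub>x (-1)^(Q x) = 2^\<nu> (2 - 2^\<delta>)\<close>.\<close>

section \<open>Binary vectors and parity characters\<close>

lemma card_lists_nth_in:
  "card {xs. length xs = k \<and> (\<forall>j<k. xs!j \<in> S j)} = (\<Prod>j<k. card (S j))"
proof (induction k arbitrary: S)
  case 0
  then show ?case by simp
next
  case (Suc k)
  have eq: "{xs. length xs = Suc k \<and> (\<forall>j<Suc k. xs!j \<in> S j)}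
     = (\<lambda>(a,xs). a#xs) ` (S 0 \<times> {xs. length xs = k \<and> (\<forall>j<k. xs!j \<in> S (Suc j))})"
  proof (rule set_eqI, rule iffI)
    fix xs assume "xs \<in> {xs. length xs = Suc k \<and> (\<forall>j<Suc k. xs!j \<in> S j)}"
    then obtain a ys where "xs = a#ys" "length ys = k" "\<forall>j<Suc k. xs!j \<in> S j"
      by (cases xs) auto
    then show "xs \<in> (\<lambda>(a,xs). a#xs) ` (S 0 \<times> {xs. length xs = k \<and> (\<forall>j<k. xs!j \<in> S (Suc j))})"
      by (auto intro!: image_eqI[of _ _ "(a,ys)"])
  next
    fix xs assume "xs \<in> (\<lambda>(a,xs). a#xs) ` (S 0 \<times> {xs. length xs = k \<and> (\<forall>j<k. xs!j \<in> S (Suc j))})"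
    then show "xs \<in> {xs. length xs = Suc k \<and> (\<forall>j<Suc k. xs!j \<in> S j)}"
      by (auto simp: less_Suc_eq_0_disj)
  qed
  have inj: "inj_on (\<lambda>(a,xs). a#xs) X" for X :: "('a \<times> 'a list) set"
    by (auto simp: inj_on_def)
  show ?case unfolding eq card_image[OF inj] card_cartesian_product Suc.IH prod.lessThan_Suc_shift ..
qed

definition bin_vecs :: "nat \<Rightarrow> int list set" where
  "bin_vecs k = {x. length x = k \<and> set x \<subseteq> {0,1}}"

lemma finite_bin_vecs: "finite (bin_vecs k)"
proof -
  have "finite {xs. set xs \<subseteq> {0::int,1} \<and> length xs = k}"
    by (rule finite_lists_length_eq) simp
  then show ?thesis unfolding bin_vecs_def by (simp add: conj_commute)
qed

lemma card_bin_vecs: "card (bin_vecs k) = 2^k"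
proof -
  have "bin_vecs k = {xs. length xs = k \<and> (\<forall>j<k. xs!j \<in> {0,1})}"
    by (auto simp: bin_vecs_def set_conv_nth)
  then show ?thesis using card_lists_nth_in[of k "\<lambda>_. {0::int,1}"] by (simp add: numeral_2_eq_2)
qed

lemma bin_vecs_nth: "x \<in> bin_vecs k \<Longrightarrow> i < k \<Longrightarrow> x!i = 0 \<or> x!i = 1"
  unfolding bin_vecs_def using nth_mem by fastforce

lemma bin_vecs_append: "bin_vecs (a+b) = (\<lambda>(u,v). u@v) ` (bin_vecs a \<times> bin_vecs b)"
proof (rule set_eqI, rule iffI)
  fix x assume "x \<in> bin_vecs (a+b)"
  then show "x \<in> (\<lambda>(u,v). u@v) ` (bin_vecs a \<times> bin_vecs b)"
    unfolding bin_vecs_def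
    by (auto intro!: image_eqI[of _ _ "(take a x, drop a x)"] dest: in_set_takeD in_set_dropD)
next
  fix x assume "x \<in> (\<lambda>(u,v). u@v) ` (bin_vecs a \<times> bin_vecs b)"
  then show "x \<in> bin_vecs (a+b)" unfolding bin_vecs_def by auto
qed

lemma sum_bin_vecs_append:
  "(\<Sum>x\<in>bin_vecs (a+b). f x) = (\<Sum>u\<in>bin_vecs a. \<Sum>v\<in>bin_vecs b. (f (u@v) :: int))"
proof -
  have inj: "inj_on (\<lambda>(u,v). u@v) (bin_vecs a \<times> bin_vecs b)"
    by (auto simp: inj_on_def bin_vecs_def)
  have "(\<Sum>x\<in>bin_vecs (a+b). f x) = sum (f \<circ> (\<lambda>(u,v). u@v)) (bin_vecs a \<times> bin_vecs b)"
    unfolding bin_vecs_append by (rule sum.reindex[OF inj])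
  also have "\<dots> = (\<Sum>u\<in>bin_vecs a. \<Sum>v\<in>bin_vecs b. f (u@v))"
    by (simp add: sum.cartesian_product comp_def split_beta)
  finally show ?thesis .
qed

lemma bin_vecs_0: "bin_vecs 0 = {[]}" by (auto simp: bin_vecs_def)
lemma bin_vecs_1: "bin_vecs (Suc 0) = {[0],[1]}"
  by (auto simp: bin_vecs_def length_Suc_conv)
lemma bin_vecs_2: "bin_vecs 2 = {[0,0],[0,1],[1,0],[1,1]}"
  by (auto simp: bin_vecs_def length_Suc_conv numeral_2_eq_2)

lemma int_card_filter_bin_vecs:
  "int (card {x\<in>bin_vecs k. p x}) = (\<Sum>x\<in>bin_vecs k. if p x then 1 else 0)"
proof -
  have "int (card {x\<in>bin_vecs k. p x}) = (\<Sum>x\<in>{x\<in>bin_vecs k. p x}. 1)" by simp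
  also have "\<dots> = (\<Sum>x\<in>bin_vecs k. if p x then 1 else 0)"
    by (rule sum.inter_filter[OF finite_bin_vecs])
  finally show ?thesis .
qed

definition chi :: "int \<Rightarrow> int" where "chi t = (if even t then 1 else -1)"

lemma chi_add: "chi (a+b) = chi a * chi b" by (auto simp: chi_def)
lemma chi_cong: "a mod 2 = b mod 2 \<Longrightarrow> chi a = chi b"
  by (auto simp: chi_def even_iff_mod_2_eq_zero)
lemma chi_mult_self: "chi a * chi a = 1" by (auto simp: chi_def)
lemma indicator_even_chi: "2 * (if even t then 1 else 0) = 1 + chi t" by (simp add: chi_def)
lemma indicator_odd_chi: "2 * (if odd t then 1 else 0) = 1 - chi t" by (simp add: chi_def)

lemma sum_chi_dot_product:
  "(\<Sum>u\<in>bin_vecs k. \<Sum>w\<in>bin_vecs k. chi (\<Sum>i<k. u!i * w!i)) = 2^k"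
proof (induction k)
  case 0
  then show ?case by (simp add: bin_vecs_0 chi_def)
next
  case (Suc k)
  let ?d = "\<lambda>u w. (\<Sum>i<k. u!i * w!i)"
  have "(\<Sum>u\<in>bin_vecs (Suc k). \<Sum>w\<in>bin_vecs (Suc k). chi (\<Sum>i<Suc k. u!i * w!i))
     = (\<Sum>a\<in>bin_vecs 1. \<Sum>u\<in>bin_vecs k. \<Sum>b\<in>bin_vecs 1. \<Sum>w\<in>bin_vecs k.
          chi (\<Sum>i<Suc k. (a@u)!i * (b@w)!i))"
    using sum_bin_vecs_append[where a=1 and b=k] by simp
  also have "\<dots> = (\<Sum>a\<in>bin_vecs 1. \<Sum>u\<in>bin_vecs k. \<Sum>b\<in>bin_vecs 1. \<Sum>w\<in>bin_vecs k.
                    chi (hd a * hd b) * chi (?d u w))"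
  proof (intro sum.cong refl)
    fix a u b w assume "a \<in> bin_vecs 1" "b \<in> bin_vecs 1"
    then obtain a0 b0 where "a = [a0]" "b = [b0]" by (auto simp: bin_vecs_1)
    then show "chi (\<Sum>i<Suc k. (a@u)!i * (b@w)!i) = chi (hd a * hd b) * chi (?d u w)"
      unfolding sum.lessThan_Suc_shift by (simp add: chi_add)
  qed
  also have "\<dots> = (\<Sum>a\<in>bin_vecs 1. \<Sum>b\<in>bin_vecs 1. \<Sum>u\<in>bin_vecs k. \<Sum>w\<in>bin_vecs k.
                    chi (hd a * hd b) * chi (?d u w))"
    by (rule sum.cong[OF refl], rule sum.swap)
  also have "\<dots> = (\<Sum>a\<in>bin_vecs 1. \<Sum>b\<in>bin_vecs 1.
                    chi (hd a * hd b) * (\<Sum>u\<in>bin_vecs k. \<Sum>w\<in>bin_vecs k. chi (?d u w)))"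
    by (simp add: sum_distrib_left)
  also have "\<dots> = (\<Sum>a\<in>bin_vecs 1. \<Sum>b\<in>bin_vecs 1. chi (hd a * hd b))
                  * (\<Sum>u\<in>bin_vecs k. \<Sum>w\<in>bin_vecs k. chi (?d u w))"
    by (simp add: sum_distrib_right)
  also have "\<dots> = 2 * 2^k" unfolding Suc.IH by (simp add: bin_vecs_1 chi_def)
  finally show ?case by simp
qed

lemma bform_cong:
  assumes "\<forall>i<k. x!i mod d = x'!i mod d" "\<forall>i<k. y!i mod d = y'!i mod d"
  shows "bform k M x y mod d = bform k M x' y' mod d"
proof -
  have "(x!i * M i j * y!j) mod d = (x'!i * M i j * y'!j) mod d" if "i<k" "j<k" for i j
    using assms that by (intro mod_mult_cong) auto
  then have "(\<Sum>i<k. (\<Sum>j<k. (x!i * M i j * y!j) mod d) mod d) mod d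
           = (\<Sum>i<k. (\<Sum>j<k. (x'!i * M i j * y'!j) mod d) mod d) mod d"
    by (auto intro!: sum.cong arg_cong[where f="\<lambda>t. t mod d"])
  then show ?thesis unfolding bform_def by (simp add: mod_sum_eq)
qed

section \<open>Arithmetic modulo \<open>2^n\<close>\<close>

lemma zunit_pow2_iff_odd:
  assumes "n \<ge> 1"
  shows "zunit (2^n) a \<longleftrightarrow> odd a"
proof
  assume "zunit (2^n) a"
  then obtain b where b: "(a*b) mod 2^n = 1 mod 2^n" unfolding zunit_def by blast
  have "(2::int) dvd 2^n" using assms by (simp add: dvd_power)
  then have "(a*b) mod 2 = 1" using b by (metis mod_mod_cancel one_mod_two_eq_one)
  then have "odd (a*b)" by (simp only: odd_iff_mod_2_eq_one)
  then show "odd a" by simp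
next
  assume "odd a"
  then have "coprime a ((2::int)^n)" by simp
  then obtain u v where uv: "u * a + v * 2^n = (1::int)"
    using bezout_int[of a "2^n"] by (auto simp: coprime_iff_gcd_eq_1)
  then have "a*u = 1 + (- v) * 2^n" by (simp add: algebra_simps)
  moreover have "(1 + (- v) * 2^n) mod 2^n = 1 mod (2::int)^n" by (rule mod_mult_self1)
  ultimately have "(a*u) mod 2^n = 1 mod 2^n" by simp
  then show "zunit (2^n) a" unfolding zunit_def by blast
qed

lemma ex1_linear_cong:
  fixes q c r :: int
  assumes "q > 0" "coprime c q"
  shows "\<exists>!t. 0 \<le> t \<and> t < q \<and> q dvd r + t * c"
proof (rule ex_ex1I)
  obtain u v where uv: "u * c + v * q = 1"
    using bezout_int[of c q] assms(2) by (auto simp: coprime_iff_gcd_eq_1)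
  define t where "t = (- r * u) mod q"
  have "1 - u * c = v * q" using uv by simp
  then have "r + (- r * u) * c = r * (v * q)" by (metis right_diff_distrib mult.right_neutral
      mult.assoc mult_minus_left diff_conv_add_uminus)
  then have "(r + (- r * u) * c) mod q = 0" by simp
  moreover have "(r + t * c) mod q = (r + (- r * u) * c) mod q"
    unfolding t_def by (metis mod_add_right_eq mod_mult_left_eq)
  ultimately have "q dvd r + t * c" by (simp add: dvd_eq_mod_eq_0)
  moreover have "0 \<le> t" "t < q" using assms(1) by (simp_all add: t_def)
  ultimately show "\<exists>t. 0 \<le> t \<and> t < q \<and> q dvd r + t * c" by blast
next
  fix t t' assume t: "0 \<le> t \<and> t < q \<and> q dvd r + t * c" and t': "0 \<le> t' \<and> t' < q \<and> q dvd r + t' * c"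
  then have "q dvd (t - t') * c" using dvd_diff[of q "r + t * c" "r + t' * c"] by (simp add: algebra_simps)
  then have d: "q dvd t - t'" using assms(2) by (simp add: coprime_commute coprime_dvd_mult_left_iff)
  have "\<bar>t - t'\<bar> < q" using t t' by auto
  then show "t = t'" using d dvd_imp_le_int[of "t - t'" q] by (cases "t = t'") auto
qed
lemma card_residue_class_mod2:
  assumes "n \<ge> 1" "b = 0 \<or> b = 1"
  shows "card {t::int\<in>{0..<2^n}. t mod 2 = b} = 2^(n-1)"
proof -
  have pow: "(2::int)^n = 2 * 2^(n-1)" using assms(1) by (cases n) auto
  have "{t::int\<in>{0..<2^n}. t mod 2 = b} = (\<lambda>k. 2*k+b) ` {0..<2^(n-1)}"
  proof (rule set_eqI, rule iffI)
    fix t assume t: "t \<in> {t::int\<in>{0..<2^n}. t mod 2 = b}"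
    then have "t div 2 \<in> {0..<2^(n-1)}" using pow by auto
    moreover have "t = 2*(t div 2) + b" using t by auto
    ultimately show "t \<in> (\<lambda>k. 2*k+b) ` {0..<2^(n-1)}" by blast
  next
    fix t assume "t \<in> (\<lambda>k. 2*k+b) ` {0..<(2::int)^(n-1)}"
    then show "t \<in> {t::int\<in>{0..<2^n}. t mod 2 = b}" using pow assms(2) by auto
  qed
  moreover have "inj_on (\<lambda>k::int. 2*k+b) A" for A by (auto simp: inj_on_def)
  ultimately show ?thesis by (simp add: card_image)
qed

section \<open>The closed form of \<open>\<lambda>\<close> for \<open>\<nu> \<ge> 2\<close>\<close>

lemma two_powr_add_eq_power:
  assumes "a + b = real e"
  shows "(2::real) powr a * 2 powr b = 2^e"
  using assms by (simp add: powr_add[symmetric] powr_realpow)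

lemma lambda_expr_main_term:
  fixes n \<nu> \<delta> :: nat
  assumes "n \<ge> 1" "\<nu> \<ge> 2"
  shows "8 * ((2::real)^(n-1) * 2 powr (real n * (real \<nu> + real \<delta> / 2 - 1))
              * 2 powr (real n * (real \<nu> - 2 + real \<delta> / 2)))
       = 2^(2*\<nu>+\<delta>) * 2^((n-1)*(2*\<nu>+\<delta>-2))"
proof -
  obtain j where n: "n = Suc j" using assms(1) by (cases n) auto
  obtain k where v: "\<nu> = k + 2" using assms(2) by (metis add.commute le_Suc_ex)
  have "(2::real) powr (real n * (real \<nu> + real \<delta> / 2 - 1))
          * 2 powr (real n * (real \<nu> - 2 + real \<delta> / 2)) = 2^((j+1)*(2*k+\<delta>+1))"
    by (rule two_powr_add_eq_power) (simp add: n v field_simps)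
  moreover have "(2::real)^3 * 2^j * 2^((j+1)*(2*k+\<delta>+1)) = 2^(2*k+4+\<delta>) * 2^(j*(2*k+\<delta>+2))"
    by (simp only: power_add[symmetric]) (simp add: algebra_simps)
  ultimately show ?thesis by (simp add: n v mult.assoc power_add)
qed

lemma lambda_expr_correction_term:
  fixes n \<nu> \<delta> :: nat
  assumes "n \<ge> 1" "\<nu> \<ge> 2" "\<delta> \<le> 2"
  shows "8 * ((real \<delta> - 1) * ((2::real)^(n-1) * 2 powr ((real n - 1) * (real \<nu> + real \<delta> / 2 - 1))
              * 2 powr (real n * (real \<nu> - 2 + real \<delta> / 2))))
       = - real_of_int (2^(\<nu>+1) * (2 - 2^\<delta>)) * 2^((n-1)*(2*\<nu>+\<delta>-2))"
proof -
  obtain j where n: "n = Suc j" using assms(1) by (cases n) auto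
  obtain k where v: "\<nu> = k + 2" using assms(2) by (metis add.commute le_Suc_ex)
  consider "\<delta> = 0" | "\<delta> = 1" | "\<delta> = 2" using assms(3) by linarith
  then show ?thesis
  proof cases
    case 1
    have "(2::real) powr ((real n - 1) * (real \<nu> + real \<delta> / 2 - 1))
            * 2 powr (real n * (real \<nu> - 2 + real \<delta> / 2)) = 2^(j*(k+1) + (j+1)*k)"
      by (rule two_powr_add_eq_power) (simp add: 1 n v field_simps)
    moreover have "(2::real)^3 * 2^j * 2^(j*(k+1) + (j+1)*k) = 2^(k+3) * 2^(j*(2*k+2))"
      by (simp only: power_add[symmetric]) (simp add: algebra_simps)
    ultimately show ?thesis by (simp add: 1 n v mult.assoc power_add)
  next
    case 3
    have "(2::real) powr ((real n - 1) * (real \<nu> + real \<delta> / 2 - 1))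
            * 2 powr (real n * (real \<nu> - 2 + real \<delta> / 2)) = 2^(j*(k+2) + (j+1)*(k+1))"
      by (rule two_powr_add_eq_power) (simp add: 3 n v field_simps)
    moreover have "(2::real)^3 * 2^j * 2^(j*(k+2) + (j+1)*(k+1)) = 2^(k+4) * 2^(j*(2*k+4))"
      by (simp only: power_add[symmetric]) (simp add: algebra_simps)
    ultimately show ?thesis by (simp add: 3 n v mult.assoc power_add distrib_left)
  qed simp
qed

lemma eight_times_lambda_expr:
  fixes n \<nu> \<delta> :: nat
  assumes "n \<ge> 1" "\<nu> \<ge> 2" "\<delta> \<le> 2"
  shows "8 * ((2::real)^(n-1) * (2 powr (real n * (real \<nu> + real \<delta> / 2 - 1))
                + (real \<delta> - 1) * 2 powr ((real n - 1) * (real \<nu> + real \<delta> / 2 - 1)))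
              * 2 powr (real n * (real \<nu> - 2 + real \<delta> / 2)))
       = real_of_int (2^(2*\<nu>+\<delta>) - 2^(\<nu>+1) * (2 - 2^\<delta>)) * 2^((n-1)*(2*\<nu>+\<delta>-2))"
proof -
  have "8 * ((2::real)^(n-1) * (2 powr (real n * (real \<nu> + real \<delta> / 2 - 1))
                + (real \<delta> - 1) * 2 powr ((real n - 1) * (real \<nu> + real \<delta> / 2 - 1)))
              * 2 powr (real n * (real \<nu> - 2 + real \<delta> / 2)))
      = 8 * (2^(n-1) * 2 powr (real n * (real \<nu> + real \<delta> / 2 - 1))
                * 2 powr (real n * (real \<nu> - 2 + real \<delta> / 2)))
        + 8 * ((real \<delta> - 1) * (2^(n-1) * 2 powr ((real n - 1) * (real \<nu> + real \<delta> / 2 - 1))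
                 * 2 powr (real n * (real \<nu> - 2 + real \<delta> / 2))))"
    by (simp only: distrib_left distrib_right mult.assoc mult.left_commute)
  then show ?thesis
    unfolding lambda_expr_main_term[OF assms(1,2)] lambda_expr_correction_term[OF assms]
    by (simp add: left_diff_distrib)
qed

section \<open>The forms of \<open>G\<close> and their reduction mod 2\<close>

locale orth_graph =
  fixes n \<nu> \<delta> :: nat and z :: int
  assumes n_ge_1: "n \<ge> 1" and nu_ge_1: "\<nu> \<ge> 1" and delta_le_2: "\<delta> \<le> 2" and z_odd: "odd z"
begin

abbreviation "m \<equiv> 2*\<nu>+\<delta>"
abbreviation "G \<equiv> Gmat \<nu> \<delta> z"

lemma delta_cases: "\<delta> = 0 \<or> \<delta> = 1 \<or> \<delta> = 2" using delta_le_2 by auto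

definition tail_form :: "int list \<Rightarrow> int list \<Rightarrow> int" where
  "tail_form x y = (if \<delta> = 1 then x!(2*\<nu>)*y!(2*\<nu>)
     else if \<delta> = 2 then z*x!(2*\<nu>)*y!(2*\<nu>) + x!(2*\<nu>)*y!(2*\<nu>+1) + z*x!(2*\<nu>+1)*y!(2*\<nu>+1)
     else 0)"

definition Gmat_row :: "nat \<Rightarrow> int list \<Rightarrow> int" where
  "Gmat_row i y = (if i < \<nu> then y!(i+\<nu>) else if \<delta> = 1 \<and> i = 2*\<nu> then y!(2*\<nu>)
      else if \<delta> = 2 \<and> i = 2*\<nu> then z*y!(2*\<nu>)+y!(2*\<nu>+1)
      else if \<delta> = 2 \<and> i = 2*\<nu>+1 then z*y!(2*\<nu>+1) else 0)"

lemma sum_Gmat_row: assumes "i < m"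
  shows "(\<Sum>j<m. x!i * G i j * y!j) = x!i * Gmat_row i y"
proof -
  have "(\<Sum>j<m. x!i * G i j * y!j) = (\<Sum>j<m. x!i * (G i j * y!j))"
    by (simp add: mult.assoc)
  also have "\<dots> = x!i * (\<Sum>j<m. G i j * y!j)" by (simp add: sum_distrib_left)
  also have "(\<Sum>j<m. G i j * y!j) = Gmat_row i y"
  proof -
    consider "i < \<nu>" | "\<nu> \<le> i \<and> i < 2*\<nu>" | "i = 2*\<nu>" | "i = 2*\<nu>+1" using assms delta_le_2 by linarith
    then show ?thesis
    proof cases
      case 1
      hence "G i j * y!j = (if j = i+\<nu> then y!j else 0)" for j by (simp add: Gmat_def)
      then show ?thesis using 1 by (simp add: Gmat_row_def sum.delta)
    next
      case 2
      have h: "G i j * y!j = 0" for j using 2 by (simp add: Gmat_def)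
      show ?thesis using 2 by (simp add: Gmat_row_def h)
    next
      case 3
      hence "G i j * y!j = (if \<delta> = 1 \<and> j = 2*\<nu> then y!j else 0) + (if \<delta> = 2 \<and> j = 2*\<nu> then z * y!j else 0)
         + (if \<delta> = 2 \<and> j = 2*\<nu>+1 then y!j else 0)" for j using nu_ge_1 by (simp add: Gmat_def)
      then show ?thesis using 3 assms nu_ge_1 delta_le_2 by (simp add: Gmat_row_def sum.distrib sum.delta)
    next
      case 4
      hence "G i j * y!j = (if \<delta> = 2 \<and> j = 2*\<nu>+1 then z * y!j else 0)" for j using nu_ge_1 by (simp add: Gmat_def)
      then show ?thesis using 4 assms nu_ge_1 delta_le_2 by (simp add: Gmat_row_def sum.delta)
    qed
  qed
  finally show ?thesis .
qed

lemma bform_Gmat: "bform m G x y = (\<Sum>i<\<nu>. x!i * y!(i+\<nu>)) + tail_form x y"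
proof -
  have "bform m G x y = (\<Sum>i<m. x!i * Gmat_row i y)"
    unfolding bform_def by (rule sum.cong) (auto simp: sum_Gmat_row)
  also have "{..<m} = {..<\<nu>} \<union> ({\<nu>..<2*\<nu>} \<union> {2*\<nu>..<m})" by auto
  also have "(\<Sum>i\<in>{..<\<nu>} \<union> ({\<nu>..<2*\<nu>} \<union> {2*\<nu>..<m}). x!i * Gmat_row i y)
     = (\<Sum>i<\<nu>. x!i * Gmat_row i y) + ((\<Sum>i\<in>{\<nu>..<2*\<nu>}. x!i * Gmat_row i y) + (\<Sum>i\<in>{2*\<nu>..<m}. x!i * Gmat_row i y))"
    by (subst sum.union_disjoint, auto, subst sum.union_disjoint, auto)
  also have "(\<Sum>i<\<nu>. x!i * Gmat_row i y) = (\<Sum>i<\<nu>. x!i * y!(i+\<nu>))"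
    by (rule sum.cong) (auto simp: Gmat_row_def)
  also have "(\<Sum>i\<in>{\<nu>..<2*\<nu>}. x!i * Gmat_row i y) = 0"
    by (rule sum.neutral) (auto simp: Gmat_row_def)
  also have "(\<Sum>i\<in>{2*\<nu>..<m}. x!i * Gmat_row i y) = tail_form x y"
  proof -
    have "{2*\<nu>..<2*\<nu>+1} = {2*\<nu>}" by auto
    moreover have "{2*\<nu>..<2*\<nu>+2} = {2*\<nu>, 2*\<nu>+1}" by auto
    ultimately show ?thesis using nu_ge_1 delta_cases by (auto simp: Gmat_row_def tail_form_def algebra_simps)
  qed
  finally show ?thesis by simp
qed

definition qform :: "int list \<Rightarrow> int" where "qform x = bform m G x x"
definition polar :: "int list \<Rightarrow> int list \<Rightarrow> int" where
  "polar x y = bform m (\<lambda>i j. G i j + G j i) x y"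

lemma polar_eq_bform: "polar x y = bform m G x y + bform m G y x"
proof -
  have "polar x y = (\<Sum>i<m. \<Sum>j<m. x!i * G i j * y!j) + (\<Sum>i<m. \<Sum>j<m. x!i * G j i * y!j)"
    unfolding polar_def bform_def by (simp add: algebra_simps sum.distrib)
  also have "(\<Sum>i<m. \<Sum>j<m. x!i * G j i * y!j) = (\<Sum>j<m. \<Sum>i<m. x!i * G j i * y!j)"
    by (rule sum.swap)
  also have "\<dots> = bform m G y x" unfolding bform_def
    by (simp add: algebra_simps)
  finally show ?thesis unfolding bform_def .
qed

lemma qform_eq: "qform x = (\<Sum>i<\<nu>. x!i * x!(i+\<nu>)) + tail_form x x"
  unfolding qform_def bform_Gmat ..

lemma polar_eq: "polar x y = (\<Sum>i<\<nu>. x!i * y!(i+\<nu>) + y!i * x!(i+\<nu>)) + tail_form x y + tail_form y x"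
  unfolding polar_eq_bform bform_Gmat by (simp add: sum.distrib)

lemma polar_commute: "polar x y = polar y x" unfolding polar_eq_bform by simp

definition vadd :: "int list \<Rightarrow> int list \<Rightarrow> int list" where
  "vadd x y = map2 (+) x y"
definition vsmul :: "int \<Rightarrow> int list \<Rightarrow> int list" where
  "vsmul c x = map ((*) c) x"

lemma vadd_nth: "i < length x \<Longrightarrow> i < length y \<Longrightarrow> vadd x y ! i = x!i + y!i"
  by (simp add: vadd_def)
lemma length_vadd[simp]: "length (vadd x y) = min (length x) (length y)"
  by (simp add: vadd_def)
lemma length_vsmul[simp]: "length (vsmul c x) = length x" by (simp add: vsmul_def)
lemma vsmul_nth: "i < length x \<Longrightarrow> vsmul c x ! i = c * x!i" by (simp add: vsmul_def)

lemma tail_form_vadd: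
  assumes "length x = m" "length y = m" "length w = m"
  shows "tail_form (vadd x y) w = tail_form x w + tail_form y w" "tail_form w (vadd x y) = tail_form w x + tail_form w y"
  using assms delta_le_2 by (auto simp: tail_form_def vadd_nth algebra_simps)

lemma tail_form_vsmul:
  assumes "length x = m" "length w = m"
  shows "tail_form (vsmul c x) w = c * tail_form x w" "tail_form w (vsmul c x) = c * tail_form w x"
  using assms delta_le_2 by (auto simp: tail_form_def vsmul_nth algebra_simps)

lemma qform_vadd:
  assumes "length x = m" "length y = m"
  shows "qform (vadd x y) = qform x + qform y + polar x y"
proof -
  have "(\<Sum>i<\<nu>. vadd x y!i * vadd x y!(i+\<nu>)) = (\<Sum>i<\<nu>. x!i * x!(i+\<nu>) + y!i * y!(i+\<nu>) + (x!i * y!(i+\<nu>) + y!i * x!(i+\<nu>)))"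
    using assms by (intro sum.cong) (auto simp: vadd_nth algebra_simps)
  moreover have "tail_form (vadd x y) (vadd x y) = tail_form x x + tail_form y y + tail_form x y + tail_form y x"
    using assms by (simp add: tail_form_vadd)
  ultimately show ?thesis unfolding qform_eq polar_eq by (simp add: sum.distrib)
qed

lemma polar_vadd:
  assumes "length x = m" "length y = m" "length w = m"
  shows "polar w (vadd x y) = polar w x + polar w y"
proof -
  have "(\<Sum>i<\<nu>. w!i * vadd x y!(i+\<nu>) + vadd x y!i * w!(i+\<nu>)) = (\<Sum>i<\<nu>. w!i * x!(i+\<nu>) + x!i * w!(i+\<nu>)) + (\<Sum>i<\<nu>. w!i * y!(i+\<nu>) + y!i * w!(i+\<nu>))"
    using assms by (auto simp: vadd_nth algebra_simps sum.distrib[symmetric] intro!: sum.cong)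
  then show ?thesis unfolding polar_eq using assms by (simp add: tail_form_vadd)
qed

lemma qform_vsmul:
  assumes "length x = m"
  shows "qform (vsmul c x) = c^2 * qform x"
proof -
  have "(\<Sum>i<\<nu>. vsmul c x!i * vsmul c x!(i+\<nu>)) = c^2 * (\<Sum>i<\<nu>. x!i * x!(i+\<nu>))"
    using assms by (auto simp: vsmul_nth sum_distrib_left power2_eq_square algebra_simps intro!: sum.cong)
  then show ?thesis unfolding qform_eq using assms by (simp add: tail_form_vsmul algebra_simps power2_eq_square)
qed

lemma polar_vsmul:
  assumes "length x = m" "length w = m"
  shows "polar w (vsmul c x) = c * polar w x"
proof -
  have "(\<Sum>i<\<nu>. w!i * vsmul c x!(i+\<nu>) + vsmul c x!i * w!(i+\<nu>)) = c * (\<Sum>i<\<nu>. w!i * x!(i+\<nu>) + x!i * w!(i+\<nu>))"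
    using assms by (auto simp: vsmul_nth sum_distrib_left algebra_simps intro!: sum.cong)
  then show ?thesis unfolding polar_eq using assms by (simp add: tail_form_vsmul algebra_simps)
qed

lemma qform_cong_mod:
  assumes "\<forall>i<m. x!i mod d = x'!i mod d"
  shows "qform x mod d = qform x' mod d"
  unfolding qform_def by (rule bform_cong) (use assms in auto)

lemma polar_cong_mod:
  assumes "\<forall>i<m. x!i mod d = x'!i mod d" "\<forall>i<m. y!i mod d = y'!i mod d"
  shows "polar x y mod d = polar x' y' mod d"
  unfolding polar_def by (rule bform_cong) (use assms in auto)

abbreviation "F2 \<equiv> bin_vecs m"

definition vadd_mod2 :: "int list \<Rightarrow> int list \<Rightarrow> int list" where
  "vadd_mod2 x u = map2 (\<lambda>a b. (a+b) mod 2) x u"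

lemma vadd_mod2_in_F2: "x \<in> F2 \<Longrightarrow> length u = m \<Longrightarrow> vadd_mod2 x u \<in> F2"
proof -
  have m2: "\<forall>t::int. t mod 2 = 0 \<or> t mod 2 = 1" by presburger
  show "x \<in> F2 \<Longrightarrow> length u = m \<Longrightarrow> vadd_mod2 x u \<in> F2"
    unfolding bin_vecs_def vadd_mod2_def using m2 by (auto simp: set_zip)
qed

lemma vadd_mod2_vadd_mod2: "x \<in> F2 \<Longrightarrow> length u = m \<Longrightarrow> vadd_mod2 (vadd_mod2 x u) u = x"
proof -
  assume x: "x \<in> F2" and u: "length u = m"
  have "vadd_mod2 (vadd_mod2 x u) u ! i = x ! i" if "i < m" for i
  proof -
    have "vadd_mod2 (vadd_mod2 x u) u ! i = ((x!i + u!i) mod 2 + u!i) mod 2"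
      using x u that by (simp add: vadd_mod2_def bin_vecs_def)
    also have "\<dots> = (x!i + u!i + u!i) mod 2" by (metis mod_add_left_eq)
    also have "\<dots> = (x!i + 2*u!i) mod 2" by (simp add: algebra_simps)
    also have "\<dots> = x!i" using bin_vecs_nth[OF x that] by auto
    finally show ?thesis .
  qed
  moreover have "length (vadd_mod2 (vadd_mod2 x u) u) = m" using x u by (simp add: vadd_mod2_def bin_vecs_def)
  ultimately show ?thesis using x by (auto simp: bin_vecs_def intro: nth_equalityI)
qed

lemma vadd_mod2_cong: "length x = m \<Longrightarrow> length u = m \<Longrightarrow> \<forall>i<m. vadd_mod2 x u ! i mod 2 = vadd x u ! i mod 2"
  by (simp add: vadd_mod2_def vadd_nth)

lemma sum_F2_translate:
  assumes "length u = m"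
  shows "(\<Sum>x\<in>F2. f (vadd_mod2 x u)) = (\<Sum>x\<in>F2. (f x :: int))"
  by (rule sum.reindex_bij_witness[of _ "\<lambda>x. vadd_mod2 x u" "\<lambda>x. vadd_mod2 x u"])
     (use assms in \<open>auto simp: vadd_mod2_vadd_mod2 vadd_mod2_in_F2\<close>)

definition char_sum :: int where "char_sum = (\<Sum>x\<in>F2. chi (qform x))"

lemma sum_chi_qform_polar:
  assumes "length u = m"
  shows "(\<Sum>x\<in>F2. chi (qform x + polar u x)) = chi (qform u) * char_sum"
proof -
  have "char_sum = (\<Sum>x\<in>F2. chi (qform (vadd_mod2 x u)))" unfolding char_sum_def using sum_F2_translate[OF assms, of "\<lambda>x. chi (qform x)"] by simp
  also have "\<dots> = (\<Sum>x\<in>F2. chi (qform u) * chi (qform x + polar u x))"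
  proof (rule sum.cong)
    fix x assume x: "x \<in> F2"
    hence lx: "length x = m" by (simp add: bin_vecs_def)
    have "qform (vadd_mod2 x u) mod 2 = qform (vadd x u) mod 2"
      by (rule qform_cong_mod) (use vadd_mod2_cong[OF lx assms] in auto)
    hence "chi (qform (vadd_mod2 x u)) = chi (qform (vadd x u))" by (rule chi_cong)
    also have "\<dots> = chi (qform u) * chi (qform x + polar u x)"
      using qform_vadd[OF lx assms] polar_commute[of x u] by (simp add: chi_add[symmetric] algebra_simps)
    finally show "chi (qform (vadd_mod2 x u)) = chi (qform u) * chi (qform x + polar u x)" .
  qed simp
  finally have "char_sum = chi (qform u) * (\<Sum>x\<in>F2. chi (qform x + polar u x))" by (simp add: sum_distrib_left)
  hence "chi (qform u) * char_sum = (\<Sum>x\<in>F2. chi (qform x + polar u x))" by (simp add: mult.assoc[symmetric] chi_mult_self)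
  then show ?thesis by simp
qed

lemma sum_chi_polar_eq_0:
  assumes "length u = m" "\<exists>x\<in>F2. odd (polar u x)"
  shows "(\<Sum>x\<in>F2. chi (polar u x)) = 0"
proof -
  obtain x0 where "x0 \<in> F2" "odd (polar u x0)" using assms(2) by blast
  then have lx0: "length x0 = m" by (simp add: bin_vecs_def)
  have "(\<Sum>x\<in>F2. chi (polar u x)) = (\<Sum>x\<in>F2. chi (polar u (vadd_mod2 x x0)))"
    using sum_F2_translate[OF lx0, of "\<lambda>x. chi (polar u x)"] by simp
  also have "\<dots> = (\<Sum>x\<in>F2. - chi (polar u x))"
  proof (rule sum.cong)
    fix x assume x: "x \<in> F2"
    hence lx: "length x = m" by (simp add: bin_vecs_def)
    have "polar u (vadd_mod2 x x0) mod 2 = polar u (vadd x x0) mod 2"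
      by (rule polar_cong_mod) (use vadd_mod2_cong[OF lx lx0] in auto)
    hence "chi (polar u (vadd_mod2 x x0)) = chi (polar u (vadd x x0))" by (rule chi_cong)
    also have "\<dots> = chi (polar u x) * chi (polar u x0)"
      using polar_vadd[OF lx lx0 assms(1)] by (simp add: chi_add)
    finally show "chi (polar u (vadd_mod2 x x0)) = - chi (polar u x)" using \<open>odd (polar u x0)\<close> by (simp add: chi_def)
  qed simp
  finally show ?thesis by (simp add: sum_negf)
qed

lemma sum_const_F2: "(\<Sum>x\<in>F2. (1::int)) = 2^m" using card_bin_vecs by simp

lemma card_even_qform_odd_polar:
  assumes "length P = m" "even (qform P)" "\<exists>x\<in>F2. odd (polar P x)"
  shows "4 * int (card {x\<in>F2. even (qform x) \<and> odd (polar P x)}) = 2^m"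
proof -
  have "4 * int (card {x\<in>F2. even (qform x) \<and> odd (polar P x)})
     = (\<Sum>x\<in>F2. (2 * (if even (qform x) then 1 else 0)) * (2 * (if odd (polar P x) then 1 else 0)))"
    unfolding int_card_filter_bin_vecs by (auto simp: sum_distrib_left intro!: sum.cong)
  also have "\<dots> = (\<Sum>x\<in>F2. 1 + chi (qform x) - chi (polar P x) - chi (qform x + polar P x))"
    unfolding indicator_even_chi indicator_odd_chi by (simp add: chi_add algebra_simps)
  also have "\<dots> = 2^m + char_sum - 0 - chi (qform P) * char_sum"
    using sum_chi_polar_eq_0[OF assms(1,3)] sum_chi_qform_polar[OF assms(1)] by (simp add: sum_subtractf sum.distrib char_sum_def sum_const_F2 card_bin_vecs)
  also have "\<dots> = 2^m" using assms(2) by (simp add: chi_def)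
  finally show ?thesis .
qed

lemma card_even_qform_odd_polar2:
  assumes "length P = m" "length R = m" "even (qform P)" "even (qform R)"
    "\<exists>x\<in>F2. odd (polar P x)" "\<exists>x\<in>F2. odd (polar R x)" "\<exists>x\<in>F2. odd (polar (vadd P R) x)"
  shows "8 * int (card {x\<in>F2. even (qform x) \<and> odd (polar P x) \<and> odd (polar R x)}) = 2^m - char_sum + chi (polar P R) * char_sum"
proof -
  have lPR: "length (vadd P R) = m" using assms by simp
  have BPR: "polar (vadd P R) x = polar P x + polar R x" if "x \<in> F2" for x
    using polar_vadd[OF assms(1,2), of x] that polar_commute by (simp add: bin_vecs_def)
  have "8 * int (card {x\<in>F2. even (qform x) \<and> odd (polar P x) \<and> odd (polar R x)})
     = (\<Sum>x\<in>F2. (2 * (if even (qform x) then 1 else 0)) * (2 * (if odd (polar P x) then 1 else 0)) * (2 * (if odd (polar R x) then 1 else 0)))"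
    unfolding int_card_filter_bin_vecs by (auto simp: sum_distrib_left intro!: sum.cong)
  also have "\<dots> = (\<Sum>x\<in>F2. 1 - chi (polar P x) - chi (polar R x) + chi (polar (vadd P R) x) + chi (qform x)
        - chi (qform x + polar P x) - chi (qform x + polar R x) + chi (qform x + polar (vadd P R) x))"
    unfolding indicator_even_chi indicator_odd_chi
  proof (rule sum.cong)
    fix x assume x: "x \<in> F2"
    show "(1 + chi (qform x)) * (1 - chi (polar P x)) * (1 - chi (polar R x)) = 1 - chi (polar P x) - chi (polar R x) + chi (polar (vadd P R) x) + chi (qform x)
        - chi (qform x + polar P x) - chi (qform x + polar R x) + chi (qform x + polar (vadd P R) x)"
    proof -
      have r: "(1 + a) * (1 - b) * (1 - c) = 1 - b - c + b*c + a - a*b - a*c + a*(b*c)" for a b c :: int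
        by (simp add: algebra_simps)
      show ?thesis unfolding BPR[OF x] chi_add r ..
    qed
  qed simp
  also have "\<dots> = (\<Sum>x\<in>F2. 1) - (\<Sum>x\<in>F2. chi (polar P x)) - (\<Sum>x\<in>F2. chi (polar R x)) + (\<Sum>x\<in>F2. chi (polar (vadd P R) x)) + (\<Sum>x\<in>F2. chi (qform x))
        - (\<Sum>x\<in>F2. chi (qform x + polar P x)) - (\<Sum>x\<in>F2. chi (qform x + polar R x)) + (\<Sum>x\<in>F2. chi (qform x + polar (vadd P R) x))"
    by (simp only: sum.distrib sum_subtractf)
  also have "\<dots> = 2^m - 0 - 0 + 0 + char_sum - chi (qform P) * char_sum - chi (qform R) * char_sum + chi (qform (vadd P R)) * char_sum"
    unfolding sum_chi_polar_eq_0[OF assms(1,5)] sum_chi_polar_eq_0[OF assms(2,6)] sum_chi_polar_eq_0[OF lPR assms(7)]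
      sum_chi_qform_polar[OF assms(1)] sum_chi_qform_polar[OF assms(2)] sum_chi_qform_polar[OF lPR] sum_const_F2 char_sum_def[symmetric] ..
  also have "chi (qform (vadd P R)) = chi (polar P R)"
    unfolding qform_vadd[OF assms(1,2)] chi_add using assms(3,4) by (simp add: chi_def)
  also have "chi (qform P) = 1" using assms(3) by (simp add: chi_def)
  also have "chi (qform R) = 1" using assms(4) by (simp add: chi_def)
  finally show ?thesis by simp
qed

definition delta_form :: "int list \<Rightarrow> int" where
  "delta_form y = (if \<delta> = 1 then y!0*y!0 else if \<delta> = 2 then z*y!0*y!0 + y!0*y!1 + z*y!1*y!1 else 0)"

lemma qform_append:
  assumes "length u = \<nu>" "length w = \<nu>"
  shows "qform (u@w@y) = (\<Sum>i<\<nu>. u!i * w!i) + delta_form y"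
proof -
  have "(\<Sum>i<\<nu>. (u@w@y)!i * (u@w@y)!(i+\<nu>)) = (\<Sum>i<\<nu>. u!i * w!i)"
    using assms by (intro sum.cong) (auto simp: nth_append)
  moreover have "tail_form (u@w@y) (u@w@y) = delta_form y"
    using assms by (simp add: tail_form_def delta_form_def nth_append)
  ultimately show ?thesis unfolding qform_eq by simp
qed

lemma char_sum_eq: "char_sum = 2^\<nu> * (2 - 2^\<delta>)"
proof -
  have "char_sum = (\<Sum>u\<in>bin_vecs \<nu>. \<Sum>w\<in>bin_vecs \<nu>. \<Sum>y\<in>bin_vecs \<delta>. chi (qform (u@w@y)))"
    unfolding char_sum_def mult_2 add.assoc sum_bin_vecs_append by simp
  also have "\<dots> = (\<Sum>u\<in>bin_vecs \<nu>. \<Sum>w\<in>bin_vecs \<nu>. \<Sum>y\<in>bin_vecs \<delta>. chi (\<Sum>i<\<nu>. u!i * w!i) * chi (delta_form y))"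
    by (intro sum.cong refl) (simp add: qform_append bin_vecs_def chi_add)
  also have "\<dots> = (\<Sum>u\<in>bin_vecs \<nu>. \<Sum>w\<in>bin_vecs \<nu>. chi (\<Sum>i<\<nu>. u!i * w!i) * (\<Sum>y\<in>bin_vecs \<delta>. chi (delta_form y)))"
    by (simp add: sum_distrib_left)
  also have "\<dots> = (\<Sum>u\<in>bin_vecs \<nu>. \<Sum>w\<in>bin_vecs \<nu>. chi (\<Sum>i<\<nu>. u!i * w!i)) * (\<Sum>y\<in>bin_vecs \<delta>. chi (delta_form y))"
    by (simp add: sum_distrib_right)
  also have "(\<Sum>y\<in>bin_vecs \<delta>. chi (delta_form y)) = 2 - 2^\<delta>"
  proof -
    have "chi z = -1" "chi (2*z+1) = -1" using z_odd by (auto simp: chi_def)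
    then show ?thesis using delta_cases
      by (auto simp: bin_vecs_0 bin_vecs_1 bin_vecs_2 delta_form_def chi_def)
  qed
  finally show ?thesis unfolding sum_chi_dot_product by simp
qed

definition zero_vec :: "int list" where "zero_vec = replicate m 0"
definition unit_vec :: "nat \<Rightarrow> int list" where "unit_vec j = (replicate m 0)[j := 1]"

lemma tail_form_delta1: "\<delta> = 1 \<Longrightarrow> tail_form x y = x!(2*\<nu>)*y!(2*\<nu>)" unfolding tail_form_def by simp
lemma tail_form_delta2: "\<delta> = 2 \<Longrightarrow> tail_form x y = z*x!(2*\<nu>)*y!(2*\<nu>) + x!(2*\<nu>)*y!(2*\<nu>+1) + z*x!(2*\<nu>+1)*y!(2*\<nu>+1)"
  unfolding tail_form_def by simp

lemma zero_vec_nth: "k < m \<Longrightarrow> zero_vec ! k = 0" by (simp add: zero_vec_def)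
lemma zero_vec_in_F2: "zero_vec \<in> F2" by (simp add: zero_vec_def bin_vecs_def set_replicate_conv_if)
lemma length_zero_vec: "length zero_vec = m" by (simp add: zero_vec_def)
lemma zero_vecI: "length P = m \<Longrightarrow> \<forall>i<m. P!i = 0 \<Longrightarrow> P = zero_vec"
  by (intro nth_equalityI) (auto simp: length_zero_vec zero_vec_nth)
lemma unit_vec_in_F2: "unit_vec j \<in> F2"
  using set_update_subset_insert[of "replicate m 0" j 1]
  by (auto simp: unit_vec_def bin_vecs_def set_replicate_conv_if split: if_splits)
lemma length_unit_vec[simp]: "length (unit_vec j) = m" by (simp add: unit_vec_def)
lemma unit_vec_nth: "k < m \<Longrightarrow> unit_vec j ! k = (if k = j then 1 else 0)"
  by (simp add: unit_vec_def nth_list_update)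

lemma qform_zero_vec: "qform zero_vec = 0" by (auto simp: qform_def bform_def zero_vec_def intro!: sum.neutral)
lemma polar_zero_vec: "polar u zero_vec = 0" by (auto simp: polar_def bform_def zero_vec_def intro!: sum.neutral)

definition hyp_partner :: "nat \<Rightarrow> nat" where "hyp_partner j = (if j < \<nu> then j+\<nu> else j-\<nu>)"

lemma tail_form_unit_vec:
  "j < 2*\<nu> \<Longrightarrow> tail_form u (unit_vec j) = 0 \<and> tail_form (unit_vec j) u = 0"
proof -
  assume "j < 2*\<nu>"
  then have "unit_vec j ! k = 0" if "2*\<nu> \<le> k" "k < m" for k using that by (simp add: unit_vec_nth)
  then show ?thesis unfolding tail_form_def using delta_cases by auto
qed

lemma polar_unit_vec:
  assumes "j < 2*\<nu>"
  shows "polar u (unit_vec j) = u ! hyp_partner j"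
proof -
  have "(\<Sum>i<\<nu>. u!i * unit_vec j!(i+\<nu>) + unit_vec j!i * u!(i+\<nu>))
      = (\<Sum>i<\<nu>. (if i = j - \<nu> \<and> \<nu> \<le> j then u!i else 0) + (if i = j then u!(i+\<nu>) else 0))"
    using assms by (intro sum.cong refl) (auto simp: unit_vec_nth)
  also have "\<dots> = u ! hyp_partner j"
    using assms by (auto simp: sum.distrib hyp_partner_def)
  finally show ?thesis unfolding polar_eq using tail_form_unit_vec[OF assms] by simp
qed

lemma qform_unit_vec: "j < 2*\<nu> \<Longrightarrow> qform (unit_vec j) = 0"
proof -
  assume j: "j < 2*\<nu>"
  have "(\<Sum>i<\<nu>. unit_vec j!i * unit_vec j!(i+\<nu>)) = 0"
    using j by (intro sum.neutral) (auto simp: unit_vec_nth)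
  then show ?thesis unfolding qform_eq using tail_form_unit_vec[OF j] by simp
qed

lemma hyp_partner_props:
  assumes "i < 2*\<nu>"
  shows "hyp_partner i < 2*\<nu>" "hyp_partner (hyp_partner i) = i" "hyp_partner i \<noteq> i"
  using assms nu_ge_1 by (auto simp: hyp_partner_def)

lemma qform_minus_tail_form_eq:
  assumes "length P = m" "length R = m" "\<forall>i<2*\<nu>. P!i = R!i"
  shows "qform P - tail_form P P = qform R - tail_form R R"
proof -
  have "(\<Sum>i<\<nu>. P!i * P!(i+\<nu>)) = (\<Sum>i<\<nu>. R!i * R!(i+\<nu>))"
    using assms by (intro sum.cong) auto
  then show ?thesis unfolding qform_eq by simp
qed

lemma tail_coord_eq_0_if_even_tail_form:
  assumes "P \<in> F2" "even (tail_form P P)" "2*\<nu> \<le> i" "i < m"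
  shows "P!i = 0"
proof -
  consider "\<delta> = 1" "i = 2*\<nu>" | "\<delta> = 2" "i = 2*\<nu> \<or> i = 2*\<nu>+1"
    using assms(3,4) delta_cases by fastforce
  then show ?thesis
  proof cases
    case 1
    then show ?thesis using assms(2) bin_vecs_nth[OF assms(1,4)] tail_form_delta1 by auto
  next
    case 2
    have "P!(2*\<nu>) = 0 \<or> P!(2*\<nu>) = 1" "P!(2*\<nu>+1) = 0 \<or> P!(2*\<nu>+1) = 1"
      using bin_vecs_nth[OF assms(1)] 2(1) by auto
    then have "P!(2*\<nu>) = 0 \<and> P!(2*\<nu>+1) = 0"
      using assms(2) z_odd unfolding tail_form_delta2[OF 2(1)] by auto
    then show ?thesis using 2(2) by auto
  qed
qed

lemma iso_point_odd_hyp_coord: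
  assumes "P \<in> F2" "P \<noteq> zero_vec" "even (qform P)"
  shows "\<exists>i<2*\<nu>. P!i = 1"
proof (rule ccontr)
  assume no1: "\<not> ?thesis"
  have hyp0: "\<forall>i<2*\<nu>. P!i = 0"
  proof (intro allI impI)
    fix i assume "i < 2*\<nu>"
    then show "P!i = 0" using no1 bin_vecs_nth[OF assms(1), of i] by auto
  qed
  then have "qform P = tail_form P P" unfolding qform_eq by simp
  then have "\<forall>i<m. P!i = 0"
    using hyp0 tail_coord_eq_0_if_even_tail_form[OF assms(1)] assms(3) by (metis not_le)
  then have "P = zero_vec" using zero_vecI assms(1)[unfolded bin_vecs_def] by blast
  with assms(2) show False ..
qed

lemma exists_polar_odd:
  assumes "length u = m" "(\<exists>i<2*\<nu>. odd (u!i)) \<or> (\<delta> = 2 \<and> (odd (u!(2*\<nu>)) \<or> odd (u!(2*\<nu>+1))))"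
  shows "\<exists>x0\<in>F2. odd (polar u x0)"
  using assms(2)
proof (elim disjE conjE exE)
  fix i assume i: "i < 2*\<nu>" "odd (u!i)"
  have "polar u (unit_vec (hyp_partner i)) = u!i"
    using polar_unit_vec hyp_partner_props[OF i(1)] by metis
  then show ?thesis using i unit_vec_in_F2 by metis
next
  assume d: "\<delta> = 2" and o: "odd (u!(2*\<nu>))"
  have lt: "2*\<nu>+1 < m" using d by simp
  have s0: "(\<Sum>i<\<nu>. u!i * unit_vec (2*\<nu>+1)!(i+\<nu>) + unit_vec (2*\<nu>+1)!i * u!(i+\<nu>)) = 0"
    using lt by (intro sum.neutral) (auto simp: unit_vec_nth)
  have "unit_vec (2*\<nu>+1) ! (2*\<nu>) = 0" "unit_vec (2*\<nu>+1) ! (2*\<nu>+1) = 1" using lt by (simp_all add: unit_vec_nth)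
  then have "polar u (unit_vec (2*\<nu>+1)) = 2*z*u!(2*\<nu>+1) + u!(2*\<nu>)"
    unfolding polar_eq s0 tail_form_delta2[OF d] by (simp add: algebra_simps)
  then have "odd (polar u (unit_vec (2*\<nu>+1)))" using o by simp
  then show ?thesis using unit_vec_in_F2 by blast
next
  assume d: "\<delta> = 2" and o: "odd (u!(2*\<nu>+1))"
  have lt: "2*\<nu>+1 < m" using d by simp
  have s0: "(\<Sum>i<\<nu>. u!i * unit_vec (2*\<nu>)!(i+\<nu>) + unit_vec (2*\<nu>)!i * u!(i+\<nu>)) = 0"
    using lt by (intro sum.neutral) (auto simp: unit_vec_nth)
  have "unit_vec (2*\<nu>) ! (2*\<nu>) = 1" "unit_vec (2*\<nu>) ! (2*\<nu>+1) = 0" using lt by (simp_all add: unit_vec_nth)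
  then have "polar u (unit_vec (2*\<nu>)) = 2*z*u!(2*\<nu>) + u!(2*\<nu>+1)"
    unfolding polar_eq s0 tail_form_delta2[OF d] by (simp add: algebra_simps)
  then have "odd (polar u (unit_vec (2*\<nu>)))" using o by simp
  then show ?thesis using unit_vec_in_F2 by blast
qed

section \<open>Isotropic vectors over \<open>\<bbbF>\<^sub>2\<close>\<close>

definition iso_points :: "int list set" where "iso_points = {P\<in>F2. P \<noteq> zero_vec \<and> even (qform P)}"

lemma finite_iso_points: "finite iso_points" unfolding iso_points_def using finite_bin_vecs by simp

lemma iso_points_differ:
  assumes P: "P \<in> F2" and R: "R \<in> F2" and "even (qform P)" "even (qform R)" "P \<noteq> R"
  shows "(\<exists>i<2*\<nu>. P!i \<noteq> R!i) \<or> (\<delta> = 2 \<and> (P!(2*\<nu>) \<noteq> R!(2*\<nu>) \<or> P!(2*\<nu>+1) \<noteq> R!(2*\<nu>+1)))"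
proof (rule ccontr)
  assume no_diff: "\<not> ?thesis"
  then have hyp: "\<forall>i<2*\<nu>. P!i = R!i" by blast
  have lP: "length P = m" and lR: "length R = m" using P R by (simp_all add: bin_vecs_def)
  have tail: "P!(2*\<nu>) = R!(2*\<nu>)" if \<delta>: "\<delta> = 1"
  proof -
    have "P!(2*\<nu>)*P!(2*\<nu>) - R!(2*\<nu>)*R!(2*\<nu>) = qform P - qform R"
      using qform_minus_tail_form_eq[OF lP lR hyp] unfolding tail_form_delta1[OF \<delta>] by simp
    then have "even (P!(2*\<nu>)*P!(2*\<nu>) - R!(2*\<nu>)*R!(2*\<nu>))" using assms(3,4) by simp
    then show ?thesis using bin_vecs_nth[OF P, of "2*\<nu>"] bin_vecs_nth[OF R, of "2*\<nu>"] \<delta> by auto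
  qed
  have "P!i = R!i" if "i < m" for i
  proof -
    have "i < 2*\<nu> \<or> (\<delta> = 1 \<and> i = 2*\<nu>) \<or> (\<delta> = 2 \<and> (i = 2*\<nu> \<or> i = 2*\<nu>+1))"
      using that delta_cases by presburger
    then show ?thesis using hyp tail no_diff by auto
  qed
  then show False using assms(5) lP lR nth_equalityI by metis
qed

lemma odd_vadd_nth:
  assumes "P \<in> F2" "R \<in> F2" "i < m" "P!i \<noteq> R!i"
  shows "odd (vadd P R ! i)"
proof -
  have "vadd P R ! i = P!i + R!i" using assms by (simp add: vadd_nth bin_vecs_def)
  moreover have "(P!i = 0 \<and> R!i = 1) \<or> (P!i = 1 \<and> R!i = 0)"
    using bin_vecs_nth[OF assms(1,3)] bin_vecs_nth[OF assms(2,3)] assms(4) by auto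
  ultimately show ?thesis by auto
qed

lemma exists_polar_odd_vadd:
  assumes P: "P \<in> F2" and R: "R \<in> F2" and "even (qform P)" "even (qform R)" "P \<noteq> R"
  shows "\<exists>x0\<in>F2. odd (polar (vadd P R) x0)"
proof -
  have l: "length (vadd P R) = m" using P R by (simp add: bin_vecs_def)
  from iso_points_differ[OF assms]
  show ?thesis
  proof (elim disjE conjE exE)
    fix i assume "i < 2*\<nu>" "P!i \<noteq> R!i"
    then have "odd (vadd P R ! i)" using odd_vadd_nth[OF P R] by simp
    then show ?thesis using exists_polar_odd[OF l] \<open>i < 2*\<nu>\<close> by blast
  next
    assume d: "\<delta> = 2" and "P!(2*\<nu>) \<noteq> R!(2*\<nu>)"
    then have "odd (vadd P R ! (2*\<nu>))" using odd_vadd_nth[OF P R] by simp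
    then show ?thesis using exists_polar_odd[OF l] d by blast
  next
    assume d: "\<delta> = 2" and "P!(2*\<nu>+1) \<noteq> R!(2*\<nu>+1)"
    then have "odd (vadd P R ! (2*\<nu>+1))" using odd_vadd_nth[OF P R] by simp
    then show ?thesis using exists_polar_odd[OF l] d by blast
  qed
qed

lemma exists_polar_odd_iso:
  assumes "P \<in> iso_points"
  shows "\<exists>x0\<in>F2. odd (polar P x0)"
proof -
  have P: "P \<in> F2" "P \<noteq> zero_vec" "even (qform P)" using assms by (auto simp: iso_points_def)
  obtain i where "i < 2*\<nu>" "P!i = 1" using iso_point_odd_hyp_coord[OF P] by blast
  then have "\<exists>i<2*\<nu>. odd (P!i)" by auto
  then show ?thesis using exists_polar_odd[of P] P(1) by (simp add: bin_vecs_def)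
qed

lemma card_iso_points_char_sum: "2 * int (card iso_points) + 2 = 2^m + char_sum"
proof -
  have e: "{x\<in>F2. even (qform x)} = insert zero_vec iso_points" using zero_vec_in_F2 qform_zero_vec by (auto simp: iso_points_def)
  have "2 * int (card {x\<in>F2. even (qform x)}) = (\<Sum>x\<in>F2. 2 * (if even (qform x) then 1 else 0))"
    unfolding int_card_filter_bin_vecs by (simp add: sum_distrib_left)
  also have "\<dots> = (\<Sum>x\<in>F2. 1 + chi (qform x))" unfolding indicator_even_chi ..
  also have "\<dots> = 2^m + char_sum" by (simp add: sum.distrib char_sum_def card_bin_vecs)
  finally show ?thesis unfolding e using finite_iso_points by (simp add: iso_points_def)
qed

lemma card_iso_points_polar_odd:
  assumes "P \<in> iso_points"
  shows "4 * int (card {R\<in>iso_points. odd (polar P R)}) = 2^m"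
proof -
  have P: "P \<in> F2" "even (qform P)" using assms by (auto simp: iso_points_def)
  have e: "{R\<in>iso_points. odd (polar P R)} = {x\<in>F2. even (qform x) \<and> odd (polar P x)}"
    using polar_zero_vec by (auto simp: iso_points_def)
  show ?thesis unfolding e
    using card_even_qform_odd_polar[OF _ P(2) exists_polar_odd_iso[OF assms]] P(1) by (simp add: bin_vecs_def)
qed

lemma card_iso_points_polar_odd2:
  assumes "P \<in> iso_points" "R \<in> iso_points" "P \<noteq> R"
  shows "8 * int (card {x\<in>iso_points. odd (polar P x) \<and> odd (polar R x)}) = 2^m - char_sum + chi (polar P R) * char_sum"
proof -
  have P: "P \<in> F2" "even (qform P)" using assms by (auto simp: iso_points_def)
  have R: "R \<in> F2" "even (qform R)" using assms by (auto simp: iso_points_def)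
  have e: "{x\<in>iso_points. odd (polar P x) \<and> odd (polar R x)} = {x\<in>F2. even (qform x) \<and> odd (polar P x) \<and> odd (polar R x)}"
    using polar_zero_vec by (auto simp: iso_points_def)
  show ?thesis unfolding e
    using card_even_qform_odd_polar2[OF _ _ P(2) R(2) exists_polar_odd_iso[OF assms(1)]
        exists_polar_odd_iso[OF assms(2)] exists_polar_odd_vadd[OF P(1) R(1) P(2) R(2) assms(3)]]
      P(1) R(1)
    by (simp add: bin_vecs_def)
qed

lemma card_iso_points: "int (card iso_points) = (2^\<nu> - 1) * (2^(\<nu>+\<delta>-1) + 1)"
proof -
  have "(2::int)^(\<nu>+\<delta>) = 2 * 2^(\<nu>+\<delta>-1)" using nu_ge_1 by (simp add: power_Suc[symmetric])
  moreover have "(2::int)^m = 2^\<nu> * 2^(\<nu>+\<delta>)" by (simp add: power_add[symmetric] mult_2)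
  ultimately have "2 * int (card iso_points) + 2 = 2 * ((2^\<nu> - 1) * (2^(\<nu>+\<delta>-1) + 1)) + 2"
    using card_iso_points_char_sum unfolding char_sum_eq by (simp add: power_add algebra_simps)
  then show ?thesis by linarith
qed

section \<open>Isotropic tuples over \<open>\<int>/2^n\<close>\<close>

abbreviation q :: int where "q \<equiv> 2^n"

lemma q_ge_2: "q \<ge> 2"
proof -
  have "(2::int)^n \<ge> 2^1" using n_ge_1 by (intro power_increasing) auto
  then show ?thesis by simp
qed

lemma two_dvd_q: "(2::int) dvd q" using n_ge_1 by (simp add: dvd_power)

lemma zunit_q_iff: "zunit q a \<longleftrightarrow> odd a" using zunit_pow2_iff_odd[OF n_ge_1] .

definition Zq_vecs :: "int list set" where "Zq_vecs = {a. length a = m \<and> set a \<subseteq> {0..<q}}"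

lemma Zq_vecs_nth: "a \<in> Zq_vecs \<Longrightarrow> i < m \<Longrightarrow> 0 \<le> a!i \<and> a!i < q"
proof -
  assume a: "a \<in> Zq_vecs" and i: "i < m"
  have "a!i \<in> set a" using a i by (simp add: Zq_vecs_def)
  then show ?thesis using a by (auto simp: Zq_vecs_def)
qed

lemma finite_Zq_vecs: "finite Zq_vecs"
proof -
  have "finite {xs. set xs \<subseteq> {0..<q} \<and> length xs = m}"
    by (rule finite_lists_length_eq) simp
  then show ?thesis unfolding Zq_vecs_def by (simp add: conj_commute)
qed

definition units_q :: "int set" where "units_q = {l\<in>{0..<q}. odd l}"

lemma card_units_q: "card units_q = 2^(n-1)"
proof -
  have "units_q = {t\<in>{0..<q}. t mod 2 = 1}" unfolding units_q_def by (auto simp: odd_iff_mod_2_eq_one)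
  then show ?thesis using card_residue_class_mod2[OF n_ge_1, of 1] by simp
qed

lemma cls_eq_units_q: "cls q a = {scale q l a | l. l \<in> units_q}"
  unfolding cls_def units_q_def using zunit_q_iff by auto

definition red2 :: "int list \<Rightarrow> int list" where "red2 a = map (\<lambda>t. t mod 2) a"

lemma length_red2[simp]: "length (red2 a) = length a" by (simp add: red2_def)
lemma red2_nth: "i < length a \<Longrightarrow> red2 a ! i = a!i mod 2" by (simp add: red2_def)

lemma length_scale[simp]: "length (scale q l a) = length a" by (simp add: scale_def)
lemma scale_nth: "i < length a \<Longrightarrow> scale q l a ! i = (l * a!i) mod q" by (simp add: scale_def)

lemma scale_in_Zq_vecs: "a \<in> Zq_vecs \<Longrightarrow> scale q l a \<in> Zq_vecs"
  unfolding Zq_vecs_def scale_def using q_ge_2 by auto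

lemma red2_scale: "odd l \<Longrightarrow> red2 (scale q l a) = red2 a"
proof -
  assume l: "odd l"
  have "(l * t) mod q mod 2 = t mod 2" for t
  proof -
    have "(l * t) mod q mod 2 = (l*t) mod 2" using two_dvd_q by (simp add: mod_mod_cancel)
    also have "\<dots> = t mod 2" using l by (metis mod_mult_left_eq odd_iff_mod_2_eq_one mult_1)
    finally show ?thesis .
  qed
  then show ?thesis by (simp add: red2_def scale_def)
qed

lemma scale_scale: "scale q l' (scale q l a) = scale q ((l'*l) mod q) a"
  by (simp add: scale_def mod_mult_right_eq mod_mult_left_eq mult.assoc)

lemma scale_one: "a \<in> Zq_vecs \<Longrightarrow> scale q 1 a = a"
proof -
  assume a: "a \<in> Zq_vecs"
  show ?thesis by (rule nth_equalityI) (use a Zq_vecs_nth in \<open>auto simp: scale_nth Zq_vecs_def\<close>)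
qed

lemma one_in_units_q: "1 \<in> units_q" using q_ge_2 by (simp add: units_q_def)

lemma units_q_inverse: "l \<in> units_q \<Longrightarrow> \<exists>l'\<in>units_q. (l'*l) mod q = 1"
proof -
  assume "l \<in> units_q"
  then have "coprime l q" by (simp add: units_q_def)
  then obtain l' where l': "0 \<le> l'" "l' < q" "q dvd -1 + l' * l"
    using ex1_linear_cong[of q l "-1"] q_ge_2 by auto
  then have "q dvd l'*l - 1" by (simp add: algebra_simps)
  then have "(l'*l) mod q = 1 mod q" by (simp only: mod_eq_dvd_iff)
  then have "(l'*l) mod q = 1" using n_ge_1 by simp
  moreover have "odd (l'*l)" using l'(3) two_dvd_q by (metis dvd_trans even_add odd_one even_minus)
  ultimately show ?thesis using l'(1,2) by (auto simp: units_q_def)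
qed

lemma units_q_mult: "l \<in> units_q \<Longrightarrow> l' \<in> units_q \<Longrightarrow> (l'*l) mod q \<in> units_q"
proof -
  assume "l \<in> units_q" "l' \<in> units_q"
  then have "odd (l'*l)" by (simp add: units_q_def)
  then have "odd ((l'*l) mod q)" using two_dvd_q by (metis dvd_mod_iff)
  then show ?thesis using q_ge_2 by (simp add: units_q_def)
qed

lemma cls_self: "a \<in> Zq_vecs \<Longrightarrow> a \<in> cls q a"
  unfolding cls_eq_units_q using one_in_units_q scale_one by force

lemma cls_subset: "a \<in> Zq_vecs \<Longrightarrow> b \<in> cls q a \<Longrightarrow> cls q b \<subseteq> cls q a"
proof
  fix c assume a: "a \<in> Zq_vecs" and b: "b \<in> cls q a" and c: "c \<in> cls q b"
  obtain l where l: "l \<in> units_q" "b = scale q l a" using b unfolding cls_eq_units_q by blast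
  obtain l' where l': "l' \<in> units_q" "c = scale q l' b" using c unfolding cls_eq_units_q by blast
  have "c = scale q ((l'*l) mod q) a" using l l' by (simp add: scale_scale)
  then show "c \<in> cls q a" unfolding cls_eq_units_q using units_q_mult[OF l(1) l'(1)] by blast
qed

lemma cls_eqI: "a \<in> Zq_vecs \<Longrightarrow> b \<in> cls q a \<Longrightarrow> cls q b = cls q a"
proof
  assume a: "a \<in> Zq_vecs" and b: "b \<in> cls q a"
  then show "cls q b \<subseteq> cls q a" by (rule cls_subset)
  obtain l where l: "l \<in> units_q" "b = scale q l a" using b unfolding cls_eq_units_q by blast
  obtain l' where l': "l' \<in> units_q" "(l'*l) mod q = 1" using units_q_inverse[OF l(1)] by blast
  have "scale q l' b = a" using l l' scale_one[OF a] by (simp add: scale_scale)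
  then have ab: "a \<in> cls q b" unfolding cls_eq_units_q using l'(1) by blast
  have bZ: "b \<in> Zq_vecs" using l scale_in_Zq_vecs a by simp
  show "cls q a \<subseteq> cls q b" using bZ ab by (rule cls_subset)
qed

lemma card_cls:
  assumes a: "a \<in> Zq_vecs" and i: "i < m" "odd (a!i)"
  shows "card (cls q a) = 2^(n-1)"
proof -
  have "inj_on (\<lambda>l. scale q l a) units_q"
  proof (rule inj_onI)
    fix l l' assume l: "l \<in> units_q" "l' \<in> units_q" and e: "scale q l a = scale q l' a"
    have "(l * a!i) mod q = (l' * a!i) mod q"
      using arg_cong[OF e, of "\<lambda>x. x!i"] a i by (simp add: scale_nth Zq_vecs_def)
    then have "q dvd (l - l') * a!i" by (simp add: mod_eq_dvd_iff algebra_simps)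
    moreover have "coprime q (a!i)" using i(2) by simp
    ultimately have "q dvd (l - l')" using coprime_dvd_mult_left_iff by blast
    moreover have "\<bar>l - l'\<bar> < q" using l by (auto simp: units_q_def)
    ultimately have "l - l' = 0" using dvd_imp_le_int[of "l-l'" q] q_ge_2 by (cases "l - l' = 0") auto
    then show "l = l'" by simp
  qed
  moreover have "cls q a = (\<lambda>l. scale q l a) ` units_q" unfolding cls_eq_units_q by blast
  ultimately show ?thesis using card_units_q by (simp add: card_image)
qed

lemma qform_update_partner:
  assumes la: "length a = m" and i: "i < 2*\<nu>" and p: "p = hyp_partner i"
  shows "qform (a[p:=t]) = qform (a[p:=0]) + t * a!i"
proof -
  have pi: "p < 2*\<nu>" "hyp_partner p = i" "p \<noteq> i" using hyp_partner_props[OF i] p by auto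
  let ?x = "a[p:=0]"
  have lx: "length ?x = m" using la by simp
  have e: "a[p:=t] = vadd ?x (vsmul t (unit_vec p))"
  proof (rule nth_equalityI)
    show "length (a[p:=t]) = length (vadd ?x (vsmul t (unit_vec p)))" using la by simp
  next
    fix k assume "k < length (a[p:=t])"
    then have k: "k < m" using la by simp
    then show "a[p:=t] ! k = vadd ?x (vsmul t (unit_vec p)) ! k"
      using la by (simp add: vadd_nth vsmul_nth unit_vec_nth nth_list_update)
  qed
  have "qform (a[p:=t]) = qform ?x + qform (vsmul t (unit_vec p)) + polar ?x (vsmul t (unit_vec p))"
    unfolding e using lx by (simp add: qform_vadd)
  also have "qform (vsmul t (unit_vec p)) = 0" using qform_vsmul[of "unit_vec p" t] qform_unit_vec[OF pi(1)] by simp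
  also have "polar ?x (vsmul t (unit_vec p)) = t * a!i"
    using polar_vsmul[of "unit_vec p" ?x t] lx polar_unit_vec[OF pi(1), of ?x] pi by simp
  finally show ?thesis by simp
qed

lemma red2_in_F2: "a \<in> Zq_vecs \<Longrightarrow> red2 a \<in> F2"
proof -
  have m2: "\<forall>t::int. t mod 2 = 0 \<or> t mod 2 = 1" by presburger
  assume "a \<in> Zq_vecs" then show ?thesis using m2 by (auto simp: bin_vecs_def Zq_vecs_def red2_def)
qed

lemma qform_red2_mod2: "length a = m \<Longrightarrow> qform (red2 a) mod 2 = qform a mod 2"
  by (rule qform_cong_mod) (simp add: red2_nth)

lemma polar_red2_mod2: "length a = m \<Longrightarrow> length b = m \<Longrightarrow> polar (red2 a) (red2 b) mod 2 = polar a b mod 2"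
  by (rule polar_cong_mod) (simp_all add: red2_nth)

definition iso_lifts :: "int list \<Rightarrow> int list set" where
  "iso_lifts P = {a\<in>Zq_vecs. red2 a = P \<and> q dvd qform a}"

definition lift_base :: "int list \<Rightarrow> nat \<Rightarrow> int list set" where
  "lift_base P p = {b. length b = m \<and>
     (\<forall>j<m. b!j \<in> (if j = p then {0} else {t\<in>{0..<q}. t mod 2 = P!j}))}"

lemma card_lift_base:
  assumes "P \<in> F2" "p < m"
  shows "card (lift_base P p) = 2^((n-1)*(m-1))"
proof -
  let ?S = "\<lambda>j. if j = p then {0} else {t\<in>{0..<q}. t mod 2 = P!j}"
  have "card (lift_base P p) = (\<Prod>j<m. card (?S j))"
    unfolding lift_base_def by (rule card_lists_nth_in)
  also have "\<dots> = (\<Prod>j\<in>{..<m}-{p}. card (?S j))"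
    using assms(2) by (subst prod.remove[of _ p]) auto
  also have "\<dots> = (\<Prod>j\<in>{..<m}-{p}. 2^(n-1))"
    using card_residue_class_mod2[OF n_ge_1] bin_vecs_nth[OF assms(1)] by (intro prod.cong) auto
  also have "\<dots> = 2^((n-1)*(m-1))" using assms(2) by (simp add: power_mult mult.commute)
  finally show ?thesis .
qed

lemma red2_eq_if_coords_agree:
  assumes P: "P \<in> iso_points" and i: "i < 2*\<nu>" "P!i = 1" and p: "p = hyp_partner i"
    and a: "a \<in> Zq_vecs" "\<forall>j<m. j \<noteq> p \<longrightarrow> a!j mod 2 = P!j" and even: "even (qform a)"
  shows "red2 a = P"
proof -
  have lP: "length P = m" using P by (simp add: iso_points_def bin_vecs_def)
  have la: "length a = m" using a by (simp add: Zq_vecs_def)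
  have pi: "p < 2*\<nu>" "p \<noteq> i" using hyp_partner_props[OF i(1)] p by auto
  have base: "(red2 a)[p:=0] = P[p:=0]"
    using a(2) la lP pi by (intro nth_equalityI) (auto simp: red2_nth nth_list_update)
  have "red2 a ! i = 1" using a(2) i pi la by (simp add: red2_nth)
  then have "qform (red2 a) = qform (P[p:=0]) + red2 a ! p"
    using qform_update_partner[of "red2 a" i p "red2 a ! p"] la i(1) p base by simp
  moreover have "qform P = qform (P[p:=0]) + P!p"
    using qform_update_partner[of P i p "P!p"] lP i p by simp
  moreover have "even (qform (red2 a))" using even qform_red2_mod2[OF la] by (simp add: even_iff_mod_2_eq_zero)
  moreover have "even (qform P)" using P by (simp add: iso_points_def)
  ultimately have "even (red2 a ! p - P!p)" by simp
  moreover have "red2 a ! p \<in> {0,1}" "P!p \<in> {0,1}"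
    using pi la bin_vecs_nth[of P m p] P by (auto simp: red2_nth iso_points_def)
  ultimately have "red2 a ! p = P!p" by auto
  then show ?thesis using a(2) la lP by (intro nth_equalityI) (auto simp: red2_nth)
qed

text \<open>Clearing the coordinate paired with an odd coordinate of \<open>P\<close> is a bijection from
  the isotropic lifts of \<open>P\<close> onto the box \<open>lift_base\<close>: the cleared coordinate \<open>t\<close> is
  recovered as the unique solution of the linear congruence \<open>Q(b) + t\<cdot>b\<^sub>i \<equiv> 0 (mod q)\<close>.\<close>
context
  fixes P i p
  assumes P: "P \<in> iso_points" and i: "i < 2*\<nu>" "P!i = 1" and p: "p = hyp_partner i"
begin

lemma partner_coord_facts: "p < m" "p \<noteq> i" "length P = m" "P \<in> F2"
  using hyp_partner_props[OF i(1)] p P by (auto simp: iso_points_def bin_vecs_def)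

lemma iso_lift_odd_coord: "a \<in> iso_lifts P \<Longrightarrow> odd (a!i)"
  using i partner_coord_facts
  by (auto simp: iso_lifts_def Zq_vecs_def red2_nth dest: arg_cong[of _ _ "\<lambda>x. x!i"])

lemma inj_on_clear_partner: "inj_on (\<lambda>a. a[p:=0]) (iso_lifts P)"
proof (rule inj_onI)
  fix a a' assume a: "a \<in> iso_lifts P" and a': "a' \<in> iso_lifts P" and e: "a[p:=0] = a'[p:=0]"
  have la: "length a = m" and la': "length a' = m" using a a' by (auto simp: iso_lifts_def Zq_vecs_def)
  have ai: "a'!i = a!i" using arg_cong[OF e, of "\<lambda>x. x!i"] partner_coord_facts i la la' by simp
  have "q dvd qform (a[p:=0]) + a!p * a!i" "q dvd qform (a[p:=0]) + a'!p * a!i"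
    using a a' qform_update_partner[OF la i(1) p, of "a!p"] qform_update_partner[OF la' i(1) p, of "a'!p"]
    by (simp_all add: iso_lifts_def e ai)
  moreover have "0 \<le> a!p \<and> a!p < q" "0 \<le> a'!p \<and> a'!p < q"
    using a a' partner_coord_facts(1) Zq_vecs_nth by (auto simp: iso_lifts_def)
  moreover have "\<exists>!t. 0 \<le> t \<and> t < q \<and> q dvd qform (a[p:=0]) + t * a!i"
    using iso_lift_odd_coord[OF a] q_ge_2 by (intro ex1_linear_cong) auto
  ultimately have "a!p = a'!p" by blast
  show "a = a'"
  proof (rule nth_equalityI)
    fix k assume "k < length a"
    then show "a!k = a'!k" using arg_cong[OF e, of "\<lambda>x. x!k"] \<open>a!p = a'!p\<close> la la'
      by (cases "k = p") auto
  qed (use la la' in simp)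
qed

lemma clear_partner_iso_lifts: "(\<lambda>a. a[p:=0]) ` iso_lifts P \<subseteq> lift_base P p"
  using partner_coord_facts Zq_vecs_nth
  by (fastforce simp: iso_lifts_def lift_base_def Zq_vecs_def red2_nth nth_list_update
      dest: arg_cong[of _ _ "\<lambda>x. x!_"])

lemma lift_base_subset_clear_partner: "lift_base P p \<subseteq> (\<lambda>a. a[p:=0]) ` iso_lifts P"
proof
  fix b assume b: "b \<in> lift_base P p"
  have lb: "length b = m" and bj: "\<And>j. j < m \<Longrightarrow> j \<noteq> p \<Longrightarrow> b!j \<in> {0..<q} \<and> b!j mod 2 = P!j"
    and bp: "b!p = 0"
    using b partner_coord_facts(1) by (auto simp: lift_base_def)
  have "odd (b!i)" using bj[of i] partner_coord_facts i by (simp add: odd_iff_mod_2_eq_one)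
  then obtain t where t: "0 \<le> t" "t < q" "q dvd qform b + t * b!i"
    using ex1_linear_cong[of q "b!i" "qform b"] q_ge_2 by auto
  define a where "a = b[p:=t]"
  have la: "length a = m" using lb by (simp add: a_def)
  have "b[p:=0] = b" using bp list_update_id[of b p] by simp
  then have Qa: "q dvd qform a"
    using t(3) qform_update_partner[OF lb i(1) p, of t] by (simp add: a_def)
  have "0 \<le> a!j \<and> a!j < q" if "j < m" for j
    using that t bj[of j] lb by (cases "j = p") (auto simp: a_def)
  then have aZ: "a \<in> Zq_vecs" using la by (auto simp: Zq_vecs_def in_set_conv_nth)
  have "red2 a = P"
    using red2_eq_if_coords_agree[OF P i p aZ] bj Qa two_dvd_q by (auto simp: a_def intro: dvd_trans)
  then have "a \<in> iso_lifts P" using aZ Qa by (simp add: iso_lifts_def)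
  moreover have "a[p:=0] = b" using \<open>b[p:=0] = b\<close> by (simp add: a_def)
  ultimately show "b \<in> (\<lambda>a. a[p:=0]) ` iso_lifts P" by force
qed

lemma card_iso_lifts_eq: "card (iso_lifts P) = 2^((n-1)*(m-1))"
proof -
  have "bij_betw (\<lambda>a. a[p:=0]) (iso_lifts P) (lift_base P p)"
    using inj_on_clear_partner clear_partner_iso_lifts lift_base_subset_clear_partner
    by (auto simp: bij_betw_def)
  then show ?thesis
    using bij_betw_same_card card_lift_base partner_coord_facts by metis
qed

end

lemma card_iso_lifts:
  assumes "P \<in> iso_points"
  shows "card (iso_lifts P) = 2^((n-1)*(m-1))"
proof -
  have "P \<in> F2" "P \<noteq> zero_vec" "even (qform P)" using assms by (auto simp: iso_points_def)
  then obtain i where "i < 2*\<nu>" "P!i = 1" using iso_point_odd_hyp_coord by blast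
  then show ?thesis using card_iso_lifts_eq[OF assms] by blast
qed

abbreviation "V \<equiv> Overts n \<nu> \<delta> z"

definition iso_tuples :: "int list set" where
  "iso_tuples = {a\<in>Zq_vecs. (\<exists>i<m. odd (a!i)) \<and> q dvd qform a}"

lemma Overts_eq: "V = (\<lambda>a. cls q a) ` iso_tuples"
  unfolding Overts_def iso_tuples_def Vtuples_def Zq_vecs_def qform_def using zunit_q_iff by auto

lemma red2_in_iso_points: "a \<in> iso_tuples \<Longrightarrow> red2 a \<in> iso_points"
proof -
  assume a: "a \<in> iso_tuples"
  have aZ: "a \<in> Zq_vecs" and la: "length a = m" using a by (auto simp: iso_tuples_def Zq_vecs_def)
  obtain i where i: "i < m" "odd (a!i)" using a by (auto simp: iso_tuples_def)
  have "red2 a ! i = 1" using i la by (simp add: red2_nth odd_iff_mod_2_eq_one)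
  then have "red2 a \<noteq> zero_vec" using i zero_vec_nth by auto
  moreover have "q dvd qform a" using a by (simp add: iso_tuples_def dvd_eq_mod_eq_0)
  then have "even (qform a)" using two_dvd_q dvd_trans by blast
  then have "even (qform (red2 a))" using qform_red2_mod2[OF la] by (simp add: even_iff_mod_2_eq_zero)
  ultimately show ?thesis using red2_in_F2[OF aZ] by (simp add: iso_points_def)
qed

lemma iso_lift_in_iso_tuples: "P \<in> iso_points \<Longrightarrow> a \<in> iso_lifts P \<Longrightarrow> a \<in> iso_tuples"
proof -
  assume P: "P \<in> iso_points" and a: "a \<in> iso_lifts P"
  have PF: "P \<in> F2" "P \<noteq> zero_vec" "even (qform P)" using P by (auto simp: iso_points_def)
  obtain i where i: "i < 2*\<nu>" "P!i = 1" using iso_point_odd_hyp_coord[OF PF] by blast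
  have la: "length a = m" using a by (auto simp: iso_lifts_def Zq_vecs_def)
  have "red2 a ! i = 1" using a i by (auto simp: iso_lifts_def)
  then have "odd (a!i)" using i la by (simp add: red2_nth odd_iff_mod_2_eq_one)
  moreover have "i < m" using i by simp
  ultimately show ?thesis using a by (auto simp: iso_tuples_def iso_lifts_def)
qed

lemma iso_tuple_in_iso_lifts: "a \<in> iso_tuples \<Longrightarrow> a \<in> iso_lifts (red2 a)"
  by (auto simp: iso_tuples_def iso_lifts_def)

lemma qform_scale_mod: "a \<in> Zq_vecs \<Longrightarrow> qform (scale q l a) mod q = (l^2 * qform a) mod q"
proof -
  assume a: "a \<in> Zq_vecs"
  have la: "length a = m" using a by (simp add: Zq_vecs_def)
  have "qform (scale q l a) mod q = qform (vsmul l a) mod q"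
    by (rule qform_cong_mod) (simp add: scale_nth vsmul_nth la)
  then show ?thesis using qform_vsmul[OF la] by simp
qed

lemma cls_iso_tuple: "a \<in> iso_tuples \<Longrightarrow> b \<in> cls q a \<Longrightarrow> b \<in> iso_tuples \<and> red2 b = red2 a"
proof -
  assume a: "a \<in> iso_tuples" and b: "b \<in> cls q a"
  obtain l where l: "l \<in> units_q" "b = scale q l a" using b unfolding cls_eq_units_q by blast
  have aZ: "a \<in> Zq_vecs" using a by (simp add: iso_tuples_def)
  have rb: "red2 b = red2 a" using l red2_scale by (simp add: units_q_def)
  have "qform b mod q = (l^2 * qform a) mod q" using qform_scale_mod[OF aZ] l by simp
  also have "\<dots> = 0" using a by (simp add: iso_tuples_def mod_mult_right_eq[symmetric])
  finally have "q dvd qform b" by (simp add: dvd_eq_mod_eq_0)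
  moreover have "b \<in> Zq_vecs" using scale_in_Zq_vecs[OF aZ] l by simp
  ultimately have "b \<in> iso_lifts (red2 a)" using rb by (simp add: iso_lifts_def)
  then have "b \<in> iso_tuples" using iso_lift_in_iso_tuples red2_in_iso_points[OF a] by blast
  then show ?thesis using rb by simp
qed

text \<open>All members of a vertex class reduce to the same vector (\<open>cls_iso_tuple\<close>), so the
  choice below does not matter on vertices.\<close>
definition vred :: "int list set \<Rightarrow> int list" where "vred A = red2 (SOME a. a \<in> A)"

lemma vred_cls: "a \<in> iso_tuples \<Longrightarrow> vred (cls q a) = red2 a"
proof -
  assume a: "a \<in> iso_tuples"
  have "a \<in> cls q a" using a cls_self by (simp add: iso_tuples_def)
  then have "(SOME b. b \<in> cls q a) \<in> cls q a" by (rule someI)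
  then show ?thesis using cls_iso_tuple[OF a] by (simp add: vred_def)
qed

lemma vred_in_iso_points: "A \<in> V \<Longrightarrow> vred A \<in> iso_points"
  using Overts_eq vred_cls red2_in_iso_points by auto

lemma Overts_member: "A \<in> V \<Longrightarrow> a \<in> A \<Longrightarrow> a \<in> iso_tuples \<and> red2 a = vred A"
  using Overts_eq vred_cls cls_iso_tuple by auto

lemma Overts_class_nonempty: "A \<in> V \<Longrightarrow> \<exists>a. a \<in> A"
  using Overts_eq cls_self by (auto simp: iso_tuples_def)

lemma Oadj_iff_polar_odd:
  assumes "A \<in> V" "B \<in> V"
  shows "Oadj n \<nu> \<delta> z A B \<longleftrightarrow> odd (polar (vred A) (vred B))"
proof -
  have key: "odd (polar a b) \<longleftrightarrow> odd (polar (vred A) (vred B))" if "a \<in> A" "b \<in> B" for a b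
  proof -
    have a: "a \<in> iso_tuples" "red2 a = vred A" using Overts_member[OF assms(1) that(1)] by auto
    have b: "b \<in> iso_tuples" "red2 b = vred B" using Overts_member[OF assms(2) that(2)] by auto
    have "length a = m" "length b = m" using a b by (auto simp: iso_tuples_def Zq_vecs_def)
    then have "polar (vred A) (vred B) mod 2 = polar a b mod 2" using polar_red2_mod2 a b by metis
    then show ?thesis by (simp add: odd_iff_mod_2_eq_one)
  qed
  obtain a b where "a \<in> A" "b \<in> B" using Overts_class_nonempty assms by blast
  then show ?thesis unfolding Oadj_def polar_def[symmetric] zunit_q_iff using key by blast
qed

definition fibre :: "int list \<Rightarrow> int list set set" where "fibre P = {A\<in>V. vred A = P}"

lemma fibre_eq: "P \<in> iso_points \<Longrightarrow> fibre P = (\<lambda>a. cls q a) ` iso_lifts P"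
proof (rule set_eqI, rule iffI)
  fix A assume P: "P \<in> iso_points" and "A \<in> fibre P"
  then have A: "A \<in> V" "vred A = P" by (auto simp: fibre_def)
  then obtain a where a: "a \<in> iso_tuples" "A = cls q a" using Overts_eq by auto
  then have "red2 a = P" using A vred_cls by simp
  then have "a \<in> iso_lifts P" using iso_tuple_in_iso_lifts[OF a(1)] by simp
  then show "A \<in> (\<lambda>a. cls q a) ` iso_lifts P" using a by blast
next
  fix A assume P: "P \<in> iso_points" and "A \<in> (\<lambda>a. cls q a) ` iso_lifts P"
  then obtain a where a: "a \<in> iso_lifts P" "A = cls q a" by blast
  have aG: "a \<in> iso_tuples" using iso_lift_in_iso_tuples[OF P a(1)] .
  then have "A \<in> V" using Overts_eq a by auto
  moreover have "vred A = P" using a aG vred_cls by (auto simp: iso_lifts_def)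
  ultimately show "A \<in> fibre P" by (simp add: fibre_def)
qed

lemma finite_iso_lifts: "finite (iso_lifts P)"
  using finite_Zq_vecs by (simp add: iso_lifts_def)

lemma cls_disjoint:
  assumes "a \<in> Zq_vecs" "b \<in> Zq_vecs" "cls q a \<noteq> cls q b"
  shows "cls q a \<inter> cls q b = {}"
  using cls_eqI[OF assms(1)] cls_eqI[OF assms(2)] assms(3) by blast

lemma Union_fibre: "P \<in> iso_points \<Longrightarrow> \<Union>(fibre P) = iso_lifts P"
proof -
  assume P: "P \<in> iso_points"
  have "cls q a \<subseteq> iso_lifts P" if "a \<in> iso_lifts P" for a
    using cls_iso_tuple iso_lift_in_iso_tuples[OF P that] iso_tuple_in_iso_lifts that
    by (fastforce simp: iso_lifts_def)
  moreover have "a \<in> cls q a" if "a \<in> iso_lifts P" for a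
    using that cls_self by (simp add: iso_lifts_def)
  ultimately show ?thesis unfolding fibre_eq[OF P] by blast
qed

lemma card_fibre:
  assumes P: "P \<in> iso_points"
  shows "card (fibre P) = 2^((n-1)*(m-2))"
proof -
  have card_class: "card A = 2^(n-1)" if A: "A \<in> fibre P" for A
  proof -
    obtain a where a: "a \<in> iso_lifts P" "A = cls q a" using A unfolding fibre_eq[OF P] by blast
    then have "a \<in> iso_tuples" using iso_lift_in_iso_tuples[OF P] by blast
    then show ?thesis using card_cls a(2) by (auto simp: iso_tuples_def)
  qed
  have disjoint: "A \<inter> B = {}" if "A \<in> fibre P" "B \<in> fibre P" "A \<noteq> B" for A B
    using that cls_disjoint fibre_eq[OF P] by (auto simp: iso_lifts_def)
  have "2^(n-1) * card (fibre P) = card (\<Union>(fibre P))"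
    using fibre_eq[OF P] finite_iso_lifts Union_fibre[OF P] card_class disjoint
    by (intro card_partition) auto
  also have "\<dots> = 2^((n-1)*(m-1))" using Union_fibre[OF P] card_iso_lifts[OF P] by simp
  also have "\<dots> = 2^(n-1) * 2^((n-1)*(m-2))"
  proof -
    have "m - 1 = Suc (m - 2)" using nu_ge_1 by simp
    then have "(n-1)*(m-1) = (n-1) + (n-1)*(m-2)" by simp
    then show ?thesis by (simp add: power_add)
  qed
  finally show ?thesis by simp
qed

lemma finite_fibre: "P \<in> iso_points \<Longrightarrow> finite (fibre P)"
  using fibre_eq finite_iso_lifts by simp

lemma card_vertices_over:
  assumes "J \<subseteq> iso_points"
  shows "card {A\<in>V. vred A \<in> J} = card J * 2^((n-1)*(m-2))"
proof -
  have e: "{A\<in>V. vred A \<in> J} = (\<Union>P\<in>J. fibre P)" by (auto simp: fibre_def)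
  have fJ: "finite J" using assms finite_iso_points finite_subset by blast
  have "card (\<Union>P\<in>J. fibre P) = (\<Sum>P\<in>J. card (fibre P))"
    by (rule card_UN_disjoint) (use fJ assms finite_fibre in \<open>auto simp: fibre_def\<close>)
  also have "\<dots> = (\<Sum>P\<in>J. 2^((n-1)*(m-2)))" using assms card_fibre by (intro sum.cong) auto
  finally show ?thesis unfolding e by simp
qed

section \<open>The orthogonal graph\<close>

abbreviation "adj \<equiv> Oadj n \<nu> \<delta> z"
abbreviation "fibre_size \<equiv> (2::nat)^((n-1)*(m-2))"

lemma finite_Overts: "finite V"
  using Overts_eq finite_Zq_vecs by (simp add: iso_tuples_def)

lemma card_Overts: "card V = card iso_points * fibre_size"
  using card_vertices_over[of iso_points] vred_in_iso_points by (simp add: Collect_conj_eq Int_absorb2 subsetI)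

lemma polar_self: "polar x x = 2 * qform x"
  unfolding polar_eq_bform qform_def by simp

lemma Oadj_sym: "A \<in> V \<Longrightarrow> B \<in> V \<Longrightarrow> adj A B = adj B A"
  using Oadj_iff_polar_odd polar_commute by metis

lemma Oadj_irrefl: "A \<in> V \<Longrightarrow> \<not> adj A A"
  using Oadj_iff_polar_odd polar_self by simp

lemma neighbours_eq:
  "A \<in> V \<Longrightarrow> {w\<in>V. adj A w} = {w\<in>V. vred w \<in> {R\<in>iso_points. odd (polar (vred A) R)}}"
  using Oadj_iff_polar_odd vred_in_iso_points by auto

lemma common_neighbours_eq: "A \<in> V \<Longrightarrow> B \<in> V \<Longrightarrow> {w\<in>V. adj A w \<and> adj B w}
   = {w\<in>V. vred w \<in> {R\<in>iso_points. odd (polar (vred A) R) \<and> odd (polar (vred B) R)}}"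
  using Oadj_iff_polar_odd vred_in_iso_points by auto

lemma card_neighbours: "A \<in> V \<Longrightarrow> card {w\<in>V. adj A w} = 2^(m-2) * fibre_size"
proof -
  assume A: "A \<in> V"
  have "(2::int)^m = 4 * 2^(m-2)"
  proof -
    have "(2::int)^((m-2)+2) = 2^(m-2) * 4" by (simp add: power_add)
    moreover have "(m-2)+2 = m" using nu_ge_1 by simp
    ultimately show ?thesis by (metis mult.commute)
  qed
  then have "card {R\<in>iso_points. odd (polar (vred A) R)} = 2^(m-2)"
    using card_iso_points_polar_odd[OF vred_in_iso_points[OF A]] by simp
  then show ?thesis unfolding neighbours_eq[OF A] by (subst card_vertices_over) auto
qed

lemma common_nbrs_eq_card:
  "A \<in> V \<Longrightarrow> B \<in> V \<Longrightarrow> common_nbrs V adj A B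
     = card {R\<in>iso_points. odd (polar (vred A) R) \<and> odd (polar (vred B) R)} * fibre_size"
  unfolding common_nbrs_def common_neighbours_eq by (subst card_vertices_over) auto

lemma common_nbrs_adjacent:
  assumes "A \<in> V" "B \<in> V" "adj A B"
  shows "8 * int (common_nbrs V adj A B) = (2^m - 2^(\<nu>+1) * (2 - 2^\<delta>)) * int fibre_size"
proof -
  have odd: "odd (polar (vred A) (vred B))" using Oadj_iff_polar_odd assms by simp
  then have "vred A \<noteq> vred B" using polar_self by auto
  then have "8 * int (card {R\<in>iso_points. odd (polar (vred A) R) \<and> odd (polar (vred B) R)})
      = 2^m - 2 * char_sum"
    using card_iso_points_polar_odd2 vred_in_iso_points assms(1,2) odd by (simp add: chi_def)
  then show ?thesis using common_nbrs_eq_card[OF assms(1,2)] by (simp add: char_sum_eq)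
qed

lemma common_nbrs_nonadjacent:
  assumes "A \<in> V" "B \<in> V" "\<not> adj A B" "vred A \<noteq> vred B"
  shows "8 * int (common_nbrs V adj A B) = 2^m * int fibre_size"
proof -
  have "even (polar (vred A) (vred B))" using Oadj_iff_polar_odd assms by simp
  then have "8 * int (card {R\<in>iso_points. odd (polar (vred A) R) \<and> odd (polar (vred B) R)}) = 2^m"
    using card_iso_points_polar_odd2 vred_in_iso_points assms(1,2,4) by (simp add: chi_def)
  then show ?thesis using common_nbrs_eq_card[OF assms(1,2)] by simp
qed

lemma common_nbrs_same_vred:
  assumes "A \<in> V" "B \<in> V" "vred A = vred B"
  shows "common_nbrs V adj A B = 2^(m-2) * fibre_size"
proof -
  have "{w\<in>V. adj A w \<and> adj B w} = {w\<in>V. adj A w}"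
    using Oadj_iff_polar_odd[OF assms(1)] Oadj_iff_polar_odd[OF assms(2)] assms(3) by auto
  then show ?thesis unfolding common_nbrs_def using card_neighbours[OF assms(1)] by simp
qed

text \<open>For \<open>\<nu> = 1\<close> a nonzero isotropic \<open>P\<close> is non-orthogonal to all \<open>2^\<delta>\<close> other
  nonzero isotropic vectors, so non-adjacent vertices lie in the same fibre.\<close>
lemma vred_eq_if_not_adjacent:
  assumes "\<nu> = 1" "A \<in> V" "B \<in> V" "\<not> adj A B"
  shows "vred A = vred B"
proof (rule ccontr)
  assume ne: "vred A \<noteq> vred B"
  let ?P = "vred A"
  have P: "?P \<in> iso_points" using vred_in_iso_points assms by simp
  have "4 * int (card {R\<in>iso_points. odd (polar ?P R)}) = 4 * 2^\<delta>"
    using card_iso_points_polar_odd[OF P] assms(1) by (simp add: power_add)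
  then have c1: "card {R\<in>iso_points. odd (polar ?P R)} = 2^\<delta>" by simp
  have "int (card iso_points) = int (2^\<delta> + 1)" using card_iso_points assms(1) by simp
  then have "card iso_points = 2^\<delta> + 1" by (simp only: of_nat_eq_iff)
  then have c2: "card (iso_points - {?P}) = 2^\<delta>" using P finite_iso_points by simp
  have "{R\<in>iso_points. odd (polar ?P R)} \<subseteq> iso_points - {?P}" using polar_self by auto
  then have "{R\<in>iso_points. odd (polar ?P R)} = iso_points - {?P}"
    using card_subset_eq finite_iso_points c1 c2 by (metis finite_Diff)
  moreover have "vred B \<in> iso_points - {?P}" using vred_in_iso_points assms ne by auto
  ultimately show False using Oadj_iff_polar_odd assms by auto
qed

lemma eq_if_vred_eq:
  assumes "fibre_size = 1" "A \<in> V" "B \<in> V" "vred A = vred B"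
  shows "A = B"
proof -
  have "card (fibre (vred A)) = 1" using card_fibre vred_in_iso_points assms by simp
  moreover have "A \<in> fibre (vred A)" "B \<in> fibre (vred A)" using assms by (auto simp: fibre_def)
  ultimately show ?thesis by (metis card_1_singletonE singletonD)
qed

lemma real_fibre_size: "(2::real)^(m-2) * fibre_size = 2^(n*(m-2))"
proof -
  have "(m-2) + (n-1)*(m-2) = n*(m-2)" using n_ge_1 by (cases n) auto
  then show ?thesis by (simp add: power_add[symmetric])
qed

lemma regular_Overts:
  "regular_graph V adj
     (2^((n-1)*(2*\<nu>+\<delta>-2)) * (2^\<nu> - 1) * (2^(\<nu>+\<delta>-1) + 1)) (2^(n*(2*\<nu>+\<delta>-2)))"
proof -
  have "real (card iso_points) = (2^\<nu> - 1) * (2^(\<nu>+\<delta>-1) + 1)"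
    using arg_cong[OF card_iso_points, of real_of_int] by simp
  then have "real (card V) = 2^((n-1)*(2*\<nu>+\<delta>-2)) * (2^\<nu> - 1) * (2^(\<nu>+\<delta>-1) + 1)"
    unfolding card_Overts by simp
  moreover have "\<forall>x\<in>V. real (card {w\<in>V. adj x w}) = 2^(n*(2*\<nu>+\<delta>-2))"
    using card_neighbours real_fibre_size by simp
  ultimately show ?thesis unfolding regular_graph_def using finite_Overts Oadj_sym Oadj_irrefl by blast
qed

lemma strongly_regular_Overts:
  assumes nu: "\<nu> = 1"
  shows "strongly_regular V adj
           (2^((n-1)*(2*\<nu>+\<delta>-2)) * (2^\<nu> - 1) * (2^(\<nu>+\<delta>-1) + 1)) (2^(n*(2*\<nu>+\<delta>-2)))
           (2^(\<delta>*n) - 2^(\<delta>*(n-1))) (of_int \<lceil>real \<delta> / 2\<rceil> * 2^(\<delta>*n))"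
proof -
  have md: "m - 2 = \<delta>" using nu by simp
  have "\<delta> + (n-1)*\<delta> = \<delta>*n" using n_ge_1 by (cases n) (auto simp: algebra_simps)
  then have dn: "(2::real)^\<delta> * 2^((n-1)*\<delta>) = 2^(\<delta>*n)" by (simp add: power_add[symmetric])
  have lambda: "real (common_nbrs V adj x y) = 2^(\<delta>*n) - 2^(\<delta>*(n-1))"
    if "x \<in> V" "y \<in> V" "adj x y" for x y
  proof -
    have "(2::int)^m - 2^(\<nu>+1) * (2 - 2^\<delta>) = 8 * (2^\<delta> - 1)" using nu by (simp add: power_add)
    then have "8 * int (common_nbrs V adj x y) = 8 * ((2^\<delta> - 1) * int fibre_size)"
      using common_nbrs_adjacent[OF that] by (simp only: mult.assoc)
    then have "int (common_nbrs V adj x y) = (2^\<delta> - 1) * int fibre_size" by simp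
    then have "real_of_int (int (common_nbrs V adj x y)) = real_of_int ((2^\<delta> - 1) * int fibre_size)"
      by (rule arg_cong)
    then have "real (common_nbrs V adj x y) = (2^\<delta> - 1) * 2^((n-1)*\<delta>)" unfolding md by simp
    then show ?thesis using dn by (simp add: algebra_simps mult.commute)
  qed
  have mu: "real (common_nbrs V adj x y) = of_int \<lceil>real \<delta> / 2\<rceil> * 2^(\<delta>*n)"
    if xy: "x \<in> V" "y \<in> V" "x \<noteq> y" "\<not> adj x y" for x y
  proof -
    have same: "vred x = vred y" using vred_eq_if_not_adjacent[OF nu xy(1,2,4)] .
    then have "\<delta> \<noteq> 0" using eq_if_vred_eq[OF _ xy(1,2)] xy(3) md by auto
    then have "\<lceil>real \<delta> / 2\<rceil> = 1" using delta_cases by (auto simp: ceiling_eq_iff)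
    moreover have "real (common_nbrs V adj x y) = 2^(\<delta>*n)"
      using common_nbrs_same_vred[OF xy(1,2) same] dn unfolding md by simp
    ultimately show ?thesis by simp
  qed
  show ?thesis unfolding strongly_regular_def using regular_Overts lambda mu by blast
qed

lemma common_nbrs_nonadjacent_pow:
  assumes nu: "\<nu> \<ge> 2" and "x \<in> V" "y \<in> V" "\<not> adj x y" "vred x \<noteq> vred y"
  shows "real (common_nbrs V adj x y) = 2^(n-1) * 2^(n*(2*\<nu>-3+\<delta>))"
proof -
  obtain j where n: "n = Suc j" using n_ge_1 by (cases n) auto
  obtain k where v: "\<nu> = Suc (Suc k)" using nu by (metis add_2_eq_Suc le_Suc_ex)
  have "(2::int)^m = 8 * 2^(m-3)" by (simp add: v)
  then have "8 * int (common_nbrs V adj x y) = 8 * (2^(m-3) * int fibre_size)"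
    using common_nbrs_nonadjacent[OF assms(2-)] by simp
  then have "real_of_int (int (common_nbrs V adj x y)) = real_of_int (2^(m-3) * int fibre_size)"
    by simp
  then have "real (common_nbrs V adj x y) = 2^(m-3) * 2^((n-1)*(m-2))" by simp
  also have "\<dots> = 2^((m-3) + (n-1)*(m-2))" by (simp add: power_add)
  also have "(m-3) + (n-1)*(m-2) = (n-1) + n*(2*\<nu>-3+\<delta>)"
  proof -
    have "m - 2 = Suc (2*k+1+\<delta>)" "m - 3 = 2*k+1+\<delta>" "2*\<nu>-3+\<delta> = 2*k+1+\<delta>" using v by simp_all
    then show ?thesis by (simp add: n algebra_simps)
  qed
  finally show ?thesis by (simp add: power_add)
qed

lemma quasi_strongly_regular_Overts:
  assumes nu: "\<nu> \<ge> 2"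
  shows "quasi_strongly_regular V adj
           (2^((n-1)*(2*\<nu>+\<delta>-2)) * (2^\<nu> - 1) * (2^(\<nu>+\<delta>-1) + 1)) (2^(n*(2*\<nu>+\<delta>-2)))
           (2^(n-1) * (2 powr (real n * (real \<nu> + real \<delta> / 2 - 1))
                       + (real \<delta> - 1) * 2 powr ((real n - 1) * (real \<nu> + real \<delta> / 2 - 1)))
                    * 2 powr (real n * (real \<nu> - 2 + real \<delta> / 2)))
           {2^(n-1) * 2^(n*(2*\<nu>-3+\<delta>)), 2^(n*(2*\<nu>-2+\<delta>))}"
  (is "quasi_strongly_regular _ _ _ _ ?lambda {?c1, ?c2}")
proof -
  have lambda: "real (common_nbrs V adj x y) = ?lambda" if "x \<in> V" "y \<in> V" "adj x y" for x y
  proof -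
    have "real_of_int (8 * int (common_nbrs V adj x y))
        = real_of_int ((2^m - 2^(\<nu>+1) * (2 - 2^\<delta>)) * int fibre_size)"
      using common_nbrs_adjacent[OF that] by simp
    then have "8 * real (common_nbrs V adj x y)
        = real_of_int (2^m - 2^(\<nu>+1) * (2 - 2^\<delta>)) * 2^((n-1)*(m-2))" by simp
    then show ?thesis using eight_times_lambda_expr[OF n_ge_1 nu delta_le_2] by simp
  qed
  have c2: "real (common_nbrs V adj x y) = ?c2" if "x \<in> V" "y \<in> V" "vred x = vred y" for x y
  proof -
    have "2*\<nu>-2+\<delta> = m - 2" using nu by simp
    then show ?thesis using common_nbrs_same_vred[OF that] real_fibre_size by simp
  qed
  obtain k where v: "\<nu> = Suc (Suc k)" using nu by (metis add_2_eq_Suc le_Suc_ex)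
  then have "n*(2*\<nu>-2+\<delta>) = n + n*(2*\<nu>-3+\<delta>)" by (simp add: algebra_simps)
  then have "(n-1) + n*(2*\<nu>-3+\<delta>) \<noteq> n*(2*\<nu>-2+\<delta>)" using n_ge_1 by linarith
  then have "?c1 \<noteq> ?c2" by (simp add: power_add[symmetric] power_inject_exp)
  show ?thesis unfolding quasi_strongly_regular_def
  proof (intro conjI ballI impI)
    fix x y assume "x \<in> V" "y \<in> V" "x \<noteq> y \<and> \<not> adj x y"
    then show "real (common_nbrs V adj x y) \<in> {?c1, ?c2}"
      using common_nbrs_nonadjacent_pow[OF nu] c2 by (cases "vred x = vred y") auto
  next
    show "2 \<le> card {?c1, ?c2}" using \<open>?c1 \<noteq> ?c2\<close> by simp
  qed (rule regular_Overts lambda | simp)+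
qed

end

theorem theorem2p3:
  fixes n \<nu> \<delta> :: nat and z :: int
  assumes "n \<ge> 1" and "\<nu> \<ge> 1" and "\<delta> \<le> 2"
    and "0 \<le> z" and "z < 2^n" and "zunit (2^n) z"
  shows "regular_graph (Overts n \<nu> \<delta> z) (Oadj n \<nu> \<delta> z)
           (2^((n-1)*(2*\<nu>+\<delta>-2)) * (2^\<nu> - 1) * (2^(\<nu>+\<delta>-1) + 1))
           (2^(n*(2*\<nu>+\<delta>-2)))
       \<and> (\<nu> = 1 \<longrightarrow>
           strongly_regular (Overts n \<nu> \<delta> z) (Oadj n \<nu> \<delta> z)
             (2^((n-1)*(2*\<nu>+\<delta>-2)) * (2^\<nu> - 1) * (2^(\<nu>+\<delta>-1) + 1))
             (2^(n*(2*\<nu>+\<delta>-2)))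
             (2^(\<delta>*n) - 2^(\<delta>*(n-1)))
             (of_int \<lceil>real \<delta> / 2\<rceil> * 2^(\<delta>*n)))
       \<and> (\<nu> \<ge> 2 \<longrightarrow>
           quasi_strongly_regular (Overts n \<nu> \<delta> z) (Oadj n \<nu> \<delta> z)
             (2^((n-1)*(2*\<nu>+\<delta>-2)) * (2^\<nu> - 1) * (2^(\<nu>+\<delta>-1) + 1))
             (2^(n*(2*\<nu>+\<delta>-2)))
             (2^(n-1) * (2 powr (real n * (real \<nu> + real \<delta> / 2 - 1))
                         + (real \<delta> - 1) * 2 powr ((real n - 1) * (real \<nu> + real \<delta> / 2 - 1)))
                      * 2 powr (real n * (real \<nu> - 2 + real \<delta> / 2)))
             {2^(n-1) * 2^(n*(2*\<nu>-3+\<delta>)), 2^(n*(2*\<nu>-2+\<delta>))})"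
proof -
  have "odd z" using assms(6) zunit_pow2_iff_odd[OF assms(1)] by simp
  then interpret orth_graph n \<nu> \<delta> z using assms by unfold_locales
  show ?thesis using regular_Overts strongly_regular_Overts quasi_strongly_regular_Overts by blast
qed

end
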